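(* Let $q$ be a prime power, $\eta\ge 0$ an integer with $\eta\neq 1$, and $(\delta_T,\delta_X)\in\mathbb{Z}\times\mathbb{N}$ with $\delta:=\delta_T+\eta\delta_X\ge 0$. For every $(\epsilon_T,\epsilon_X)\in\mathbb{N}^2$ with $\epsilon_T\ge q$ and $\epsilon_X\ge q$, \[d_\eta(\delta_T,\delta_X)\ \ge\ \min_{M\in\Delta^*(\delta_T,\delta_X)}\#\{N\in\Delta^*(\epsilon_T,\epsilon_X)\,:\,M \text{ divides } N\},\] and this is an equality for $\epsilon_T=\delta_T+\eta\delta_X+q$ and $\epsilon_X=\delta_X+q$.
   Context: $R=\mathbb{F}_q[T_1,T_2,X_1,X_2]$; the bidegree of $T_1^{c_1}T_2^{c_2}X_1^{d_1}X_2^{d_2}$ is $(c_1+c_2-\eta d_1, d_1+d_2)$; $R(\delta_T,\delta_X)$ is the span of monomials of bidegree $(\delta_T,\delta_X)$. The Hirzebruch surface $\mathcal{H}_\eta$ is the quotient of $(\mathbb{A}^2\setminus\{0\})^2$ by $\mathbb{G}_m^2$ acting by $(\lambda,\mu)\cdot(t_1,t_2,x_1,x_2)=(\lambda t_1,\lambda t_2,\mu\lambda^{-\eta}x_1,\mu x_2)$; each of its $(q+1)^2$ $\mathbb{F}_q$-points has a unique representative of the form $(1,a,1,b)$, $(0,1,1,b)$, $(1,a,0,1)$ or $(0,1,0,1)$ ($a,b\in\mathbb{F}_q$), at which polynomials are evaluated. $C_\eta(\delta_T,\delta_X)$ is the image of $F\mapsto(F(P))_{P\in\mathcal{H}_\eta(\mathbb{F}_q)}$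 on $R(\delta_T,\delta_X)$, and $d_\eta(\delta_T,\delta_X)$ its minimum Hamming distance. For a bidegree $(\delta_T,\delta_X)$ with $\delta=\delta_T+\eta\delta_X\ge0$: for $(d_2,c_2)\in\mathbb{N}^2$ with $d_2\le\delta_X$, $\eta d_2+c_2\le\delta$, put $M(d_2,c_2)=T_1^{\delta-\eta d_2-c_2}T_2^{c_2}X_1^{\delta_X-d_2}X_2^{d_2}$. Let $A=\delta_X$ if $\delta_T\ge0$ and $A=\delta/\eta$ if $\delta_T<0$; $\mathcal{A}_X=\{\alpha\in\mathbb{N}:\alpha\le\min(\lfloor A\rfloor,q-1)\}\cup(\{A\}\cap\mathbb{N})$; $\mathcal{K}(\delta_T,\delta_X)=\{(\alpha,\beta)\in\mathbb{N}^2:\alpha\in\mathcal{A}_X,\ \beta\le\min(\delta-\eta\alpha,q)-1\text{ or }\beta=\delta-\eta\alpha\}$. Condition (H): $\eta\ge2$, $\delta_T<0$, $\eta\mid\delta_T$, $q\le\delta_X+\delta_T/\eta$. Let $\mathcal{K}^*(\delta_T,\delta_X)=\mathcal{K}(\delta_T,\delta_X)\setminus\{(\delta/\eta,0)\}$ if (H) holds and $=\mathcal{K}(\delta_T,\delta_X)$ otherwise, and $\Delta^*(\delta_T,\delta_X)=\{M(\alpha,\beta):(\alpha,\beta)\in\mathcal{K}^*(\delta_T,\delta_X)\}$ (the monomial $M(\alpha,\beta)$ taken with respect to the relevant bidegree). *)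

theory Defs
  imports Complex_Main
begin

text \<open>Monomials T1^c1 T2^c2 X1^d1 X2^d2 are encoded by exponent tuples (c1,c2,d1,d2).\<close>
type_synonym mono = "nat \<times> nat \<times> nat \<times> nat"

definition bideg :: "nat \<Rightarrow> mono \<Rightarrow> int \<times> nat" where
  "bideg \<eta> m = (case m of (c1,c2,d1,d2) \<Rightarrow>
      (int c1 + int c2 - int \<eta> * int d1, d1 + d2))"

definition hmonos :: "nat \<Rightarrow> int \<Rightarrow> nat \<Rightarrow> mono set" where
  "hmonos \<eta> dT dX = {m. bideg \<eta> m = (dT, dX)}"

definition mono_dvd :: "mono \<Rightarrow> mono \<Rightarrow> bool" where
  "mono_dvd m n = (case m of (c1,c2,d1,d2) \<Rightarrow> case n of (c1',c2',d1',d2') \<Rightarrow>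
      c1 \<le> c1' \<and> c2 \<le> c2' \<and> d1 \<le> d1' \<and> d2 \<le> d2')"

text \<open>The F_q-rational points of the Hirzebruch surface, by their normalized representatives.\<close>
definition hirz_points :: "('a::field \<times> 'a \<times> 'a \<times> 'a) set" where
  "hirz_points = {(1,a,1,b) | a b. True} \<union> {(0,1,1,b) | b. True}
                 \<union> {(1,a,0,1) | a. True} \<union> {(0,1,0,1)}"

text \<open>A polynomial of R(dT,dX) is given by a coefficient function on its monomial basis.\<close>
definition eval_poly :: "nat \<Rightarrow> int \<Rightarrow> nat \<Rightarrow> (mono \<Rightarrow> 'a::field)
     \<Rightarrow> ('a \<times> 'a \<times> 'a \<times> 'a) \<Rightarrow> 'a" where
  "eval_poly \<eta> dT dX c P = (case P of (t1,t2,x1,x2) \<Rightarrow>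
     (\<Sum>m\<in>hmonos \<eta> dT dX. case m of (c1,c2,d1,d2) \<Rightarrow>
        c m * t1^c1 * t2^c2 * x1^d1 * x2^d2))"

definition hcode :: "'a itself \<Rightarrow> nat \<Rightarrow> int \<Rightarrow> nat \<Rightarrow>
     (('a::{finite,field} \<times> 'a \<times> 'a \<times> 'a) \<Rightarrow> 'a) set" where
  "hcode _ \<eta> dT dX = {(\<lambda>P. if P \<in> hirz_points then eval_poly \<eta> dT dX c P else 0) | c. True}"

definition hweight :: "(('a::{finite,field} \<times> 'a \<times> 'a \<times> 'a) \<Rightarrow> 'a) \<Rightarrow> nat" where
  "hweight w = card {P \<in> hirz_points. w P \<noteq> 0}"

definition hdist :: "'a::{finite,field} itself \<Rightarrow> nat \<Rightarrow> int \<Rightarrow> nat \<Rightarrow> nat" where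
  "hdist T \<eta> dT dX = Min {hweight w | w. w \<in> hcode T \<eta> dT dX \<and> w \<noteq> (\<lambda>_. 0)}"

definition Mmono :: "nat \<Rightarrow> int \<Rightarrow> nat \<Rightarrow> nat \<Rightarrow> nat \<Rightarrow> mono" where
  "Mmono \<eta> dT dX d2 c2 =
     (nat (dT + int \<eta> * int dX - int \<eta> * int d2 - int c2), c2, dX - d2, d2)"

definition A_val :: "nat \<Rightarrow> int \<Rightarrow> nat \<Rightarrow> rat" where
  "A_val \<eta> dT dX = (if dT \<ge> 0 then of_nat dX
                      else of_int (dT + int \<eta> * int dX) / of_nat \<eta>)"

definition A_X :: "nat \<Rightarrow> nat \<Rightarrow> int \<Rightarrow> nat \<Rightarrow> nat set" where
  "A_X q \<eta> dT dX = {\<alpha>. int \<alpha> \<le> min \<lfloor>A_val \<eta> dT dX\<rfloor> (int q - 1)}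
                    \<union> {\<alpha>. of_nat \<alpha> = A_val \<eta> dT dX}"

definition K_set :: "nat \<Rightarrow> nat \<Rightarrow> int \<Rightarrow> nat \<Rightarrow> (nat \<times> nat) set" where
  "K_set q \<eta> dT dX = {(\<alpha>,\<beta>). \<alpha> \<in> A_X q \<eta> dT dX \<and>
      (int \<beta> \<le> min (dT + int \<eta> * int dX - int \<eta> * int \<alpha>) (int q) - 1
       \<or> int \<beta> = dT + int \<eta> * int dX - int \<eta> * int \<alpha>)}"

definition cond_H :: "nat \<Rightarrow> nat \<Rightarrow> int \<Rightarrow> nat \<Rightarrow> bool" where
  "cond_H q \<eta> dT dX \<longleftrightarrow> \<eta> \<ge> 2 \<and> dT < 0 \<and> int \<eta> dvd dT \<and>
      int q \<le> int dX + dT div int \<eta>"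

definition K_star :: "nat \<Rightarrow> nat \<Rightarrow> int \<Rightarrow> nat \<Rightarrow> (nat \<times> nat) set" where
  "K_star q \<eta> dT dX = (if cond_H q \<eta> dT dX
      then K_set q \<eta> dT dX - {(nat ((dT + int \<eta> * int dX) div int \<eta>), 0)}
      else K_set q \<eta> dT dX)"

definition Delta_star :: "nat \<Rightarrow> nat \<Rightarrow> int \<Rightarrow> nat \<Rightarrow> mono set" where
  "Delta_star q \<eta> dT dX = (\<lambda>(\<alpha>,\<beta>). Mmono \<eta> dT dX \<alpha> \<beta>) ` K_star q \<eta> dT dX"

definition bound_fn :: "nat \<Rightarrow> nat \<Rightarrow> int \<Rightarrow> nat \<Rightarrow> nat \<Rightarrow> nat \<Rightarrow> nat" where
  "bound_fn q \<eta> dT dX eT eX =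
     Min ((\<lambda>M. card {N \<in> Delta_star q \<eta> (int eT) eX. mono_dvd M N}) ` Delta_star q \<eta> dT dX)"

end

theory Submission
  imports Defs "HOL-Computational_Algebra.Polynomial" "HOL-Library.Cardinality"
begin

text \<open>An \<open>F\<^sub>q\<close>-point of \<open>H\<^sub>\<eta>\<close> is a pair \<open>(t, x)\<close> of points of \<open>P\<^sup>1\<close>, and on the fibre over \<open>t\<close> a polynomial
  of bidegree \<open>(dT, dX)\<close> is the binary form \<open>\<Sum>\<^sub>k r\<^sub>k(t) X\<^sub>1\<^bsup>dX-k\<^esup> X\<^sub>2\<^sup>k\<close>, whose coefficients \<open>r\<^sub>k\<close> are binary
  forms of degree \<open>\<delta> - \<eta>k\<close> in \<open>t\<close>. If \<open>a\<close> is the largest \<open>X\<^sub>2\<close>-degree among the fibres, then \<open>r\<^sub>a\<close> is nonzero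
  at \<open>\<ge> (q - (\<delta> - \<eta>a)) + 1\<close> points \<open>t\<close>, and over each of them the fibre is nonzero at
  \<open>\<ge> (q - a) + [a = dX]\<close> points \<open>x\<close>. When \<open>q \<le> a < dX\<close>, the exponents of \<open>X\<^sub>2/X\<^sub>1\<close> are first folded below
  \<open>q\<close> using \<open>x\<^sup>q = x\<close>. Products of linear forms attain these bounds, so \<open>d\<^sub>\<eta>(dT, dX)\<close> is the minimum over
  \<open>(a, b) \<in> K\<^sup>*\<close> of \<open>((q - a) + [a = dX]) ((q - b) + [b = \<delta> - \<eta>a])\<close>. This product is also a bound on the
  number of multiples of \<open>M(a, b)\<close> in \<open>\<Delta>\<^sup>*(\<epsilon>)\<close> for \<open>\<epsilon> \<ge> (q, q)\<close>, with equality for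
  \<open>\<epsilon> = (\<delta> + q, dX + q)\<close>.\<close>

section \<open>Binary forms on the projective line\<close>

definition proj_line :: "('a::field \<times> 'a) set" where
  "proj_line = range (\<lambda>a. (1, a)) \<union> {(0, 1)}"

text \<open>A polynomial \<open>p\<close> with \<open>degree p \<le> e\<close> is the dehomogenisation of a binary form of degree \<open>e\<close>;
  \<open>form_eval e p\<close> evaluates that form at the normalised representatives of \<open>proj_line\<close>.\<close>
definition form_eval :: "nat \<Rightarrow> 'a::field poly \<Rightarrow> 'a \<times> 'a \<Rightarrow> 'a" where
  "form_eval e p t = (if fst t = 0 then coeff p e else poly p (snd t))"

text \<open>For \<open>a < q\<close>, the sharp lower bound on the number of points of \<open>P\<^sup>1(F\<^sub>q)\<close> at which a nonzero
  form of degree \<open>e\<close> whose dehomogenisation has degree \<open>a\<close> does not vanish.\<close>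
definition proj_weight :: "nat \<Rightarrow> nat \<Rightarrow> nat \<Rightarrow> nat" where
  "proj_weight q e a = (q - a) + (if a = e then 1 else 0)"

lemma proj_line_cases:
  assumes "t \<in> proj_line"
  obtains a where "t = (1, a)" | "t = (0, 1)"
  using assms unfolding proj_line_def by auto

lemma one_in_proj_line [simp]: "(1, a) \<in> proj_line"
  and zero_one_in_proj_line [simp]: "(0, 1) \<in> proj_line"
  unfolding proj_line_def by auto

lemma finite_proj_line [simp]: "finite (proj_line :: ('a::{finite,field} \<times> 'a) set)"
  by (rule finite_subset[of _ UNIV]) auto

lemma card_UNIV_field_ge_2: "2 \<le> CARD('a::{finite,field})"
proof -
  have "card {0::'a, 1} \<le> CARD('a)" by (rule card_mono) auto
  thus ?thesis by simp
qed

lemma card_proj_line_filter: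
  fixes f :: "'a::{finite,field} \<times> 'a \<Rightarrow> bool"
  shows "card {t \<in> proj_line. f t} = card {a. f (1, a)} + (if f (0, 1) then 1 else 0)"
proof -
  have "{t \<in> proj_line. f t} = (\<lambda>a. (1, a)) ` {a. f (1, a)} \<union> (if f (0, 1) then {(0, 1)} else {})"
    unfolding proj_line_def by auto
  moreover have "card ((\<lambda>a::'a. (1::'a, a)) ` {a. f (1, a)}) = card {a. f (1, a)}"
    by (rule card_image) (auto simp: inj_on_def)
  ultimately show ?thesis by (auto simp: card_insert_if)
qed

lemma card_proj_line_filter_pos:
  fixes f :: "'a::{finite,field} \<times> 'a \<Rightarrow> bool"
  assumes "t \<in> proj_line" "f t"
  shows "1 \<le> card {t \<in> proj_line. f t}"
proof -
  have "{t \<in> proj_line. f t} \<noteq> {}" using assms by blast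
  thus ?thesis by (simp add: Suc_le_eq card_gt_0_iff)
qed

lemma card_poly_nonroots_ge:
  fixes p :: "'a::{finite,field} poly"
  assumes "p \<noteq> 0"
  shows "CARD('a) - degree p \<le> card {b. poly p b \<noteq> 0}"
proof -
  have "{b. poly p b \<noteq> 0} = UNIV - {b. poly p b = 0}" by auto
  hence "card {b. poly p b \<noteq> 0} = CARD('a) - card {b. poly p b = 0}"
    by (simp add: card_Diff_subset)
  moreover have "card {b. poly p b = 0} \<le> degree p" by (rule card_poly_roots_bound[OF assms])
  ultimately show ?thesis by linarith
qed

lemma card_form_nonzero_ge_degree:
  fixes p :: "'a::{finite,field} poly"
  assumes "degree p \<le> e" and "p \<noteq> 0"
  shows "proj_weight CARD('a) e (degree p) \<le> card {t \<in> proj_line. form_eval e p t \<noteq> 0}"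
proof -
  have "card {t \<in> proj_line. form_eval e p t \<noteq> 0}
      = card {a. poly p a \<noteq> 0} + (if coeff p e \<noteq> 0 then 1 else 0)"
    using card_proj_line_filter[of "\<lambda>t. form_eval e p t \<noteq> 0"] by (simp add: form_eval_def)
  moreover have "degree p = e \<Longrightarrow> coeff p e \<noteq> 0" using assms(2) by (metis leading_coeff_0_iff)
  ultimately show ?thesis
    using card_poly_nonroots_ge[OF assms(2)] unfolding proj_weight_def by auto
qed

lemma card_form_nonzero_ge:
  fixes p :: "'a::{finite,field} poly"
  assumes deg: "degree p \<le> e" and nz: "t \<in> proj_line" "form_eval e p t \<noteq> 0"
  shows "proj_weight CARD('a) e e \<le> card {t \<in> proj_line. form_eval e p t \<noteq> 0}"
proof (cases "CARD('a) \<le> e")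
  case True
  thus ?thesis using card_proj_line_filter_pos[of t "\<lambda>t. form_eval e p t \<noteq> 0", OF nz]
    unfolding proj_weight_def by simp
next
  case False
  have "p \<noteq> 0" using nz(2) unfolding form_eval_def by (auto split: if_splits)
  moreover have "proj_weight CARD('a) e e \<le> proj_weight CARD('a) e (degree p)"
    using deg False unfolding proj_weight_def by auto
  ultimately show ?thesis using card_form_nonzero_ge_degree[OF deg] by (meson order_trans)
qed

section \<open>Folding exponents with \<open>x\<^sup>q = x\<close>\<close>

lemma power_card_UNIV_eq_self: "(x::'a::{finite,field}) ^ CARD('a) = x"
proof (cases "x = 0")
  case False
  let ?U = "UNIV - {0::'a}"
  have "x ^ card ?U * \<Prod>?U = (\<Prod>y\<in>?U. x * y)" by (simp add: prod.distrib)
  also have "\<dots> = \<Prod>?U"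
    by (rule prod.reindex_bij_witness[of _ "\<lambda>y. y / x" "\<lambda>y. x * y"]) (use False in auto)
  finally have "x ^ (CARD('a) - 1) = 1" by (simp add: card_Diff_subset prod_zero_iff)
  moreover have "CARD('a) = Suc (CARD('a) - 1)" by simp
  ultimately show ?thesis by (metis power_Suc2 mult_1)
qed simp

definition fold_exp :: "nat \<Rightarrow> nat \<Rightarrow> nat" where
  "fold_exp q k = (if k < q then k else (k - 1) mod (q - 1) + 1)"

lemma power_add_mult_card_minus_one:
  assumes "1 \<le> j"
  shows "(b::'a::{finite,field}) ^ (j + m * (CARD('a) - 1)) = b ^ j"
proof -
  have period: "b ^ (i + (CARD('a) - 1)) = b ^ i" if "1 \<le> i" for i
  proof -
    have "i + (CARD('a) - 1) = (i - 1) + CARD('a)"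
      using that card_UNIV_field_ge_2[where 'a='a] by linarith
    hence "b ^ (i + (CARD('a) - 1)) = b ^ (i - 1) * b"
      by (simp add: power_add power_card_UNIV_eq_self)
    also have "\<dots> = b ^ i" using that by (cases i) (auto simp: mult.commute)
    finally show ?thesis .
  qed
  show ?thesis
  proof (induction m)
    case (Suc m)
    have "b ^ (j + Suc m * (CARD('a) - 1)) = b ^ ((j + m * (CARD('a) - 1)) + (CARD('a) - 1))"
      by (simp only: mult_Suc add_ac)
    also have "\<dots> = b ^ (j + m * (CARD('a) - 1))" using assms by (intro period) simp
    finally show ?case using Suc.IH by simp
  qed simp
qed

lemma power_fold_exp: "(b::'a::{finite,field}) ^ fold_exp CARD('a) k = b ^ k"
proof (cases "k < CARD('a)")
  case False
  have "k = ((k - 1) mod (CARD('a) - 1) + 1) + ((k - 1) div (CARD('a) - 1)) * (CARD('a) - 1)"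
    using False mod_div_mult_eq[of "k - 1" "CARD('a) - 1"] card_UNIV_field_ge_2[where 'a='a]
    by linarith
  hence "b ^ k = b ^ ((k - 1) mod (CARD('a) - 1) + 1)"
    by (metis power_add_mult_card_minus_one le_add2)
  thus ?thesis using False by (simp add: fold_exp_def)
qed (simp add: fold_exp_def)

lemma fold_exp_le:
  assumes "2 \<le> q"
  shows "fold_exp q k \<le> q - 1"
proof -
  have "(k - 1) mod (q - 1) < q - 1" using assms by (intro mod_less_divisor) simp
  thus ?thesis unfolding fold_exp_def by (cases "k < q") simp_all
qed

lemma fold_exp_le_self:
  assumes "2 \<le> q"
  shows "fold_exp q k \<le> k"
proof (cases "k < q")
  case False
  hence "fold_exp q k = (k - 1) mod (q - 1) + 1" unfolding fold_exp_def by simp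
  moreover have "(k - 1) mod (q - 1) \<le> k - 1" by (rule mod_less_eq_dividend)
  ultimately show ?thesis using False assms by linarith
qed (simp add: fold_exp_def)

lemma fold_exp_eq_self: "a < q \<Longrightarrow> fold_exp q a = a"
  unfolding fold_exp_def by simp

lemma fold_exp_neq_self:
  assumes q: "2 \<le> q" and ne: "fold_exp q k \<noteq> k"
  shows "1 \<le> fold_exp q k" "fold_exp q k + (q - 1) \<le> k"
proof -
  have kq: "q \<le> k" using ne unfolding fold_exp_def by (auto split: if_splits)
  hence fold: "fold_exp q k = (k - 1) mod (q - 1) + 1" unfolding fold_exp_def by simp
  thus "1 \<le> fold_exp q k" by simp
  have "(q - 1) div (q - 1) \<le> (k - 1) div (q - 1)" using kq by (intro div_le_mono) auto
  hence "1 \<le> (k - 1) div (q - 1)" using q by simp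
  hence "1 * (q - 1) \<le> (k - 1) div (q - 1) * (q - 1)" by (rule mult_le_mono1)
  thus "fold_exp q k + (q - 1) \<le> k"
    unfolding fold using mod_div_mult_eq[of "k - 1" "q - 1"] kq q by linarith
qed

section \<open>Slices of a bihomogeneous polynomial\<close>

lemma form_eval_sum_monom:
  fixes f :: "nat \<Rightarrow> 'a::field"
  assumes "x \<in> proj_line"
  shows "(\<Sum>k\<le>n. f k * fst x ^ (n - k) * snd x ^ k) = form_eval n (\<Sum>k\<le>n. monom (f k) k) x"
  using assms
proof (rule proj_line_cases)
  fix a assume x: "x = (1,a)"
  show ?thesis unfolding x form_eval_def by (simp add: poly_sum poly_monom)
next
  assume x: "x = (0,1)"
  have "(\<Sum>k\<le>n. f k * (0::'a) ^ (n - k)) = (\<Sum>k\<in>{n}. f k * (0::'a) ^ (n - k))"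
    by (rule sum.mono_neutral_right) auto
  moreover have "coeff (\<Sum>k\<le>n. monom (f k) k) n = (\<Sum>k\<in>{n}. f k)"
    by (simp add: coeff_sum_monom)
  ultimately show ?thesis unfolding x form_eval_def by simp
qed

lemma degree_sum_monom_le: "degree (\<Sum>k\<le>n. monom (f k) k) \<le> n"
  by (rule degree_sum_le) (auto intro: order.trans[OF degree_monom_le])

text \<open>A polynomial of \<open>R(dT, dX)\<close> is \<open>\<Sum>\<^sub>k r\<^sub>k(T) X\<^sub>1\<^bsup>dX-k\<^esup> X\<^sub>2\<^sup>k\<close>, where the slice \<open>r\<^sub>k\<close> is a binary
  form in \<open>T\<close> of degree \<open>slice_deg \<eta> dT dX k = \<delta> - \<eta>k\<close>, with coefficients \<open>c (slice_mono \<eta> dT dX k j)\<close>.\<close>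
definition slice_deg :: "nat \<Rightarrow> int \<Rightarrow> nat \<Rightarrow> nat \<Rightarrow> int" where
  "slice_deg \<eta> dT dX k = dT + int \<eta> * int dX - int \<eta> * int k"

definition slice_mono :: "nat \<Rightarrow> int \<Rightarrow> nat \<Rightarrow> nat \<Rightarrow> nat \<Rightarrow> mono" where
  "slice_mono \<eta> dT dX k j = (nat (slice_deg \<eta> dT dX k) - j, j, dX - k, k)"

definition slice_range :: "nat \<Rightarrow> int \<Rightarrow> nat \<Rightarrow> nat \<Rightarrow> nat set" where
  "slice_range \<eta> dT dX k = (if slice_deg \<eta> dT dX k \<ge> 0 then {..nat (slice_deg \<eta> dT dX k)} else {})"

definition slice_poly :: "nat \<Rightarrow> int \<Rightarrow> nat \<Rightarrow> (mono \<Rightarrow> 'a::field) \<Rightarrow> nat \<Rightarrow> 'a poly" where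
  "slice_poly \<eta> dT dX c k = (if slice_deg \<eta> dT dX k \<ge> 0 then
      (\<Sum>j\<le>nat (slice_deg \<eta> dT dX k). monom (c (slice_mono \<eta> dT dX k j)) j) else 0)"

definition slice_eval :: "nat \<Rightarrow> int \<Rightarrow> nat \<Rightarrow> (mono \<Rightarrow> 'a::field) \<Rightarrow> nat \<Rightarrow> 'a \<times> 'a \<Rightarrow> 'a" where
  "slice_eval \<eta> dT dX c k t = form_eval (nat (slice_deg \<eta> dT dX k)) (slice_poly \<eta> dT dX c k) t"

definition fibre_poly :: "nat \<Rightarrow> int \<Rightarrow> nat \<Rightarrow> (mono \<Rightarrow> 'a::field) \<Rightarrow> 'a \<times> 'a \<Rightarrow> 'a poly" where
  "fibre_poly \<eta> dT dX c t = (\<Sum>k\<le>dX. monom (slice_eval \<eta> dT dX c k t) k)"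

lemma degree_slice_poly: "degree (slice_poly \<eta> dT dX c k) \<le> nat (slice_deg \<eta> dT dX k)"
  unfolding slice_poly_def by (auto intro: degree_sum_monom_le)

lemma slice_poly_eq_0: "slice_deg \<eta> dT dX k < 0 \<Longrightarrow> slice_poly \<eta> dT dX c k = 0"
  unfolding slice_poly_def by auto

lemma slice_eval_eq_0: "slice_deg \<eta> dT dX k < 0 \<Longrightarrow> slice_eval \<eta> dT dX c k t = 0"
  unfolding slice_eval_def form_eval_def by (simp add: slice_poly_eq_0)

lemma hmonos_eq_slices:
  "hmonos \<eta> dT dX = (\<lambda>(k,j). slice_mono \<eta> dT dX k j) ` (SIGMA k:{..dX}. slice_range \<eta> dT dX k)"
proof (intro set_eqI iffI)
  fix m assume m: "m \<in> hmonos \<eta> dT dX"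
  obtain c1 c2 d1 d2 where mm: "m = (c1,c2,d1,d2)" by (cases m) auto
  have b: "int c1 + int c2 - int \<eta> * int d1 = dT" "d1 + d2 = dX"
    using m unfolding mm hmonos_def bideg_def by auto
  have E: "slice_deg \<eta> dT dX d2 = int c1 + int c2"
    unfolding slice_deg_def using b by (auto simp: algebra_simps of_nat_diff)
  have "(d2, c2) \<in> (SIGMA k:{..dX}. slice_range \<eta> dT dX k)"
    using b E unfolding slice_range_def by auto
  moreover have "m = slice_mono \<eta> dT dX d2 c2" unfolding mm slice_mono_def E using b by auto
  ultimately show "m \<in> (\<lambda>(k,j). slice_mono \<eta> dT dX k j) ` (SIGMA k:{..dX}. slice_range \<eta> dT dX k)"
    by force
next
  fix m assume "m \<in> (\<lambda>(k,j). slice_mono \<eta> dT dX k j) ` (SIGMA k:{..dX}. slice_range \<eta> dT dX k)"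
  then obtain k j where kj: "k \<le> dX" "j \<in> slice_range \<eta> dT dX k" "m = slice_mono \<eta> dT dX k j"
    by auto
  have E: "slice_deg \<eta> dT dX k \<ge> 0" "j \<le> nat (slice_deg \<eta> dT dX k)"
    using kj(2) unfolding slice_range_def by (auto split: if_splits)
  show "m \<in> hmonos \<eta> dT dX" unfolding kj(3) slice_mono_def hmonos_def bideg_def
    using E kj(1) by (auto simp: slice_deg_def of_nat_diff algebra_simps)
qed

lemma inj_on_slice_mono: "inj_on (\<lambda>(k,j). slice_mono \<eta> dT dX k j) A"
  unfolding inj_on_def slice_mono_def by auto

lemma finite_slice_range[simp]: "finite (slice_range \<eta> dT dX k)" unfolding slice_range_def by auto

lemma finite_hmonos[simp]: "finite (hmonos \<eta> dT dX)"
  unfolding hmonos_eq_slices by auto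

lemma slice_eval_eq_sum:
  assumes "t \<in> proj_line"
  shows "slice_eval \<eta> dT dX c k t = (\<Sum>j\<in>slice_range \<eta> dT dX k.
    c (slice_mono \<eta> dT dX k j) * fst t ^ (nat (slice_deg \<eta> dT dX k) - j) * snd t ^ j)"
proof (cases "0 \<le> slice_deg \<eta> dT dX k")
  case True
  thus ?thesis unfolding slice_eval_def slice_poly_def slice_range_def
    using form_eval_sum_monom[OF assms, of "\<lambda>j. c (slice_mono \<eta> dT dX k j)"] by simp
qed (simp add: slice_range_def slice_eval_eq_0)

definition hpoint :: "'a \<times> 'a \<Rightarrow> 'a \<times> 'a \<Rightarrow> 'a \<times> 'a \<times> 'a \<times> 'a" where
  "hpoint t x = (fst t, snd t, fst x, snd x)"

lemma eval_poly_hpoint: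
  fixes c :: "mono \<Rightarrow> 'a::field"
  assumes t: "t \<in> proj_line" and x: "x \<in> proj_line"
  shows "eval_poly \<eta> dT dX c (hpoint t x) = form_eval dX (fibre_poly \<eta> dT dX c t) x"
proof -
  let ?E = "\<lambda>k. nat (slice_deg \<eta> dT dX k)"
  have "eval_poly \<eta> dT dX c (hpoint t x)
      = (\<Sum>(k, j)\<in>(SIGMA k:{..dX}. slice_range \<eta> dT dX k). c (slice_mono \<eta> dT dX k j) *
          fst t ^ (?E k - j) * snd t ^ j * fst x ^ (dX - k) * snd x ^ k)"
    unfolding eval_poly_def hmonos_eq_slices hpoint_def
    by (subst sum.reindex[OF inj_on_slice_mono]) (simp add: slice_mono_def case_prod_beta)
  also have "\<dots> = (\<Sum>k\<le>dX. (\<Sum>j\<in>slice_range \<eta> dT dX k.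
      c (slice_mono \<eta> dT dX k j) * fst t ^ (?E k - j) * snd t ^ j) * fst x ^ (dX - k) * snd x ^ k)"
    by (subst sum.Sigma[symmetric]) (auto simp: sum_distrib_right intro!: sum.cong)
  also have "\<dots> = (\<Sum>k\<le>dX. slice_eval \<eta> dT dX c k t * fst x ^ (dX - k) * snd x ^ k)"
    by (simp add: slice_eval_eq_sum[OF t])
  also have "\<dots> = form_eval dX (fibre_poly \<eta> dT dX c t) x"
    unfolding fibre_poly_def using form_eval_sum_monom[OF x] by simp
  finally show ?thesis .
qed

lemma form_eval_0 [simp]: "form_eval e 0 t = 0"
  unfolding form_eval_def by simp

lemma form_eval_sum: "form_eval e (sum p S) t = (\<Sum>k\<in>S. form_eval e (p k) t)"
  unfolding form_eval_def by (simp add: coeff_sum poly_sum)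

lemma coeff_fibre_poly: "k \<le> dX \<Longrightarrow> coeff (fibre_poly \<eta> dT dX c t) k = slice_eval \<eta> dT dX c k t"
  unfolding fibre_poly_def by (rule coeff_sum_monom)

lemma degree_fibre_poly: "degree (fibre_poly \<eta> dT dX c t) \<le> dX"
  unfolding fibre_poly_def by (rule degree_sum_monom_le)

section \<open>Codewords and their weights\<close>

definition codeword ::
    "nat \<Rightarrow> int \<Rightarrow> nat \<Rightarrow> (mono \<Rightarrow> 'a::{finite,field}) \<Rightarrow> ('a \<times> 'a \<times> 'a \<times> 'a \<Rightarrow> 'a)" where
  "codeword \<eta> dT dX c = (\<lambda>P. if P \<in> hirz_points then eval_poly \<eta> dT dX c P else 0)"

lemma hcode_eq_range_codeword: "hcode TYPE('a::{finite,field}) \<eta> dT dX = range (codeword \<eta> dT dX)"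
  unfolding hcode_def codeword_def by auto

lemma hirz_points_eq: "hirz_points = case_prod hpoint ` (proj_line \<times> proj_line)"
proof
  show "hirz_points \<subseteq> case_prod hpoint ` (proj_line \<times> proj_line)"
  proof
    fix P assume "P \<in> hirz_points"
    then consider a b where "P = hpoint (1, a) (1, b)" | b where "P = hpoint (0, 1) (1, b)"
      | a where "P = hpoint (1, a) (0, 1)" | "P = hpoint (0, 1) (0, 1)"
      unfolding hirz_points_def hpoint_def by auto
    thus "P \<in> case_prod hpoint ` (proj_line \<times> proj_line)" by cases force+
  qed
  show "case_prod hpoint ` (proj_line \<times> proj_line) \<subseteq> hirz_points"
    unfolding hirz_points_def proj_line_def hpoint_def by auto
qed

lemma inj_hpoint: "inj (case_prod hpoint)"
  unfolding hpoint_def by (auto simp: inj_on_def)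

lemma hweight_codeword:
  "hweight (codeword \<eta> dT dX c :: _ \<Rightarrow> 'a::{finite,field})
     = (\<Sum>t\<in>proj_line. card {x\<in>proj_line. eval_poly \<eta> dT dX c (hpoint t x) \<noteq> 0})"
proof -
  have "{P \<in> hirz_points. codeword \<eta> dT dX c P \<noteq> 0}
      = case_prod hpoint ` (SIGMA t:proj_line. {x\<in>proj_line. eval_poly \<eta> dT dX c (hpoint t x) \<noteq> 0})"
    unfolding codeword_def hirz_points_eq by auto
  hence "hweight (codeword \<eta> dT dX c)
      = card (SIGMA t:proj_line. {x\<in>proj_line. eval_poly \<eta> dT dX c (hpoint t x) \<noteq> 0})"
    unfolding hweight_def by (simp add: card_image inj_on_subset[OF inj_hpoint])
  also have "\<dots> = (\<Sum>t\<in>proj_line. card {x\<in>proj_line. eval_poly \<eta> dT dX c (hpoint t x) \<noteq> 0})"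
    by (rule card_SigmaI) auto
  finally show ?thesis .
qed

definition fibre_weight :: "nat \<Rightarrow> int \<Rightarrow> nat \<Rightarrow> (mono \<Rightarrow> 'a::{finite,field}) \<Rightarrow> 'a \<times> 'a \<Rightarrow> nat" where
  "fibre_weight \<eta> dT dX c t = card {x\<in>proj_line. form_eval dX (fibre_poly \<eta> dT dX c t) x \<noteq> 0}"

lemma hweight_codeword_fibres:
  "hweight (codeword \<eta> dT dX c :: _ \<Rightarrow> 'a::{finite,field})
     = (\<Sum>t\<in>proj_line. fibre_weight \<eta> dT dX c t)"
  unfolding hweight_codeword fibre_weight_def
  by (intro sum.cong refl arg_cong[where f=card]) (auto simp: eval_poly_hpoint)

lemma codeword_eq_0_iff:
  "codeword \<eta> dT dX c = (\<lambda>_. 0 :: 'a::{finite,field})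
     \<longleftrightarrow> (\<forall>t\<in>proj_line. \<forall>x\<in>proj_line. eval_poly \<eta> dT dX c (hpoint t x) = 0)"
proof
  assume z: "codeword \<eta> dT dX c = (\<lambda>_. 0)"
  show "\<forall>t\<in>proj_line. \<forall>x\<in>proj_line. eval_poly \<eta> dT dX c (hpoint t x) = 0"
  proof (intro ballI)
    fix t x :: "'a \<times> 'a" assume "t \<in> proj_line" "x \<in> proj_line"
    hence "hpoint t x \<in> hirz_points" unfolding hirz_points_eq by auto
    thus "eval_poly \<eta> dT dX c (hpoint t x) = 0"
      using fun_cong[OF z, of "hpoint t x"] unfolding codeword_def by simp
  qed
next
  assume z: "\<forall>t\<in>proj_line. \<forall>x\<in>proj_line. eval_poly \<eta> dT dX c (hpoint t x) = 0"
  show "codeword \<eta> dT dX c = (\<lambda>_. 0)"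
  proof
    fix P show "codeword \<eta> dT dX c P = 0"
    proof (cases "P \<in> hirz_points")
      case True
      then obtain t x where "t \<in> proj_line" "x \<in> proj_line" "P = hpoint t x"
        unfolding hirz_points_eq by auto
      thus ?thesis using z True unfolding codeword_def by simp
    qed (simp add: codeword_def)
  qed
qed

section \<open>The index set \<open>K\<^sup>*\<close>\<close>

lemma slice_deg_top [simp]: "slice_deg \<eta> dT dX dX = dT"
  unfolding slice_deg_def by simp

lemma slice_deg_antimono: "a \<le> k \<Longrightarrow> slice_deg \<eta> dT dX k \<le> slice_deg \<eta> dT dX a"
  unfolding slice_deg_def by (simp add: mult_left_mono)

lemma slice_deg_le: "slice_deg \<eta> dT dX a \<le> dT + int \<eta> * int dX"
  unfolding slice_deg_def by simp

lemma slice_deg_ge: "a \<le> dX \<Longrightarrow> dT \<le> slice_deg \<eta> dT dX a"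
  using slice_deg_antimono[of a dX \<eta> dT dX] by simp

lemma A_X_nonneg_iff:
  assumes "0 \<le> dT"
  shows "a \<in> A_X q \<eta> dT dX \<longleftrightarrow> (a \<le> dX \<and> a < q) \<or> a = dX"
  unfolding A_X_def A_val_def using assms by auto

lemma A_X_neg_iff:
  assumes dT: "dT < 0" and d: "0 \<le> dT + int \<eta> * int dX"
  shows "a \<in> A_X q \<eta> dT dX
    \<longleftrightarrow> (0 \<le> slice_deg \<eta> dT dX a \<and> a < q) \<or> slice_deg \<eta> dT dX a = 0"
proof -
  have "0 < \<eta>" using dT d by (cases \<eta>) auto
  have A: "A_val \<eta> dT dX = of_int (dT + int \<eta> * int dX) / of_nat \<eta>"
    unfolding A_val_def using dT by simp
  have "int a \<le> \<lfloor>A_val \<eta> dT dX\<rfloor> \<longleftrightarrow> (of_int (int a * int \<eta>) :: rat) \<le> of_int (dT + int \<eta> * int dX)"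
    unfolding A le_floor_iff using \<open>0 < \<eta>\<close> by (simp add: pos_le_divide_eq)
  also have "\<dots> \<longleftrightarrow> 0 \<le> slice_deg \<eta> dT dX a"
    unfolding of_int_le_iff slice_deg_def by (simp add: algebra_simps)
  finally have le: "int a \<le> \<lfloor>A_val \<eta> dT dX\<rfloor> \<longleftrightarrow> 0 \<le> slice_deg \<eta> dT dX a" .
  have "of_nat a = A_val \<eta> dT dX \<longleftrightarrow> (of_int (int a * int \<eta>) :: rat) = of_int (dT + int \<eta> * int dX)"
    unfolding A using \<open>0 < \<eta>\<close> by (simp add: eq_divide_eq)
  also have "\<dots> \<longleftrightarrow> slice_deg \<eta> dT dX a = 0"
    unfolding of_int_eq_iff slice_deg_def by (simp add: algebra_simps) (rule eq_commute)
  finally have eq: "of_nat a = A_val \<eta> dT dX \<longleftrightarrow> slice_deg \<eta> dT dX a = 0" .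
  show ?thesis unfolding A_X_def using le eq by auto
qed

lemma K_set_iff:
  "(a, b) \<in> K_set q \<eta> dT dX \<longleftrightarrow> a \<in> A_X q \<eta> dT dX \<and>
     ((int b < slice_deg \<eta> dT dX a \<and> b < q) \<or> int b = slice_deg \<eta> dT dX a)"
  unfolding K_set_def slice_deg_def by auto

lemma cond_H_div:
  assumes "cond_H q \<eta> dT dX"
  shows "(dT + int \<eta> * int dX) div int \<eta> = dT div int \<eta> + int dX" "int q \<le> dT div int \<eta> + int dX"
  using assms unfolding cond_H_def by auto

lemma K_star_memI:
  assumes d: "0 \<le> dT + int \<eta> * int dX" and a: "a < q" "a \<le> dX" and E: "0 \<le> slice_deg \<eta> dT dX a"
  shows "(a, nat (slice_deg \<eta> dT dX a)) \<in> K_star q \<eta> dT dX"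
proof -
  have "a \<in> A_X q \<eta> dT dX"
  proof (cases "0 \<le> dT")
    case True
    thus ?thesis unfolding A_X_nonneg_iff[OF True] using a by simp
  next
    case False
    hence "dT < 0" by simp
    thus ?thesis using A_X_neg_iff[OF _ d, where a=a and q=q] a E by simp
  qed
  hence K: "(a, nat (slice_deg \<eta> dT dX a)) \<in> K_set q \<eta> dT dX"
    unfolding K_set_iff using E by simp
  have "a \<noteq> nat ((dT + int \<eta> * int dX) div int \<eta>)" if "cond_H q \<eta> dT dX"
    using cond_H_div[OF that] a by linarith
  thus ?thesis using K unfolding K_star_def by auto
qed

lemma K_star_memI_top:
  assumes "0 \<le> dT"
  shows "(dX, nat dT) \<in> K_star q \<eta> dT dX"
proof -
  have "(dX, nat dT) \<in> K_set q \<eta> dT dX"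
    unfolding K_set_iff A_X_nonneg_iff[OF assms] using assms by simp
  moreover have "\<not> cond_H q \<eta> dT dX" unfolding cond_H_def using assms by simp
  ultimately show ?thesis unfolding K_star_def by simp
qed

text \<open>Without the exclusion under (H), the index \<open>(\<delta>/\<eta>, 0)\<close> with \<open>\<delta>/\<eta> \<ge> q\<close> would violate \<open>a < q\<close>.\<close>
lemma K_star_memD:
  assumes eta: "\<eta> \<noteq> 1" and d: "0 \<le> dT + int \<eta> * int dX" and K: "(a, b) \<in> K_star q \<eta> dT dX"
  shows "a \<le> dX" "0 \<le> slice_deg \<eta> dT dX a" "int b \<le> slice_deg \<eta> dT dX a"
    "a < q \<or> (a = dX \<and> 0 \<le> dT)" "b < q \<or> int b = slice_deg \<eta> dT dX a"
proof -
  have "(a, b) \<in> K_set q \<eta> dT dX" using K unfolding K_star_def by (auto split: if_splits)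
  hence KS: "a \<in> A_X q \<eta> dT dX"
    and b: "(int b < slice_deg \<eta> dT dX a \<and> b < q) \<or> int b = slice_deg \<eta> dT dX a"
    unfolding K_set_iff by auto
  thus "int b \<le> slice_deg \<eta> dT dX a" "b < q \<or> int b = slice_deg \<eta> dT dX a" by auto
  have "a \<le> dX \<and> 0 \<le> slice_deg \<eta> dT dX a \<and> (a < q \<or> (a = dX \<and> 0 \<le> dT))"
  proof (cases "0 \<le> dT")
    case True
    thus ?thesis using KS slice_deg_ge[of a dX dT \<eta>] unfolding A_X_nonneg_iff[OF True] by auto
  next
    case False
    hence E: "0 \<le> slice_deg \<eta> dT dX a" "a < q \<or> slice_deg \<eta> dT dX a = 0"
      using KS A_X_neg_iff[OF _ d, where a=a and q=q] by auto
    have "0 < \<eta>" using False d by (cases \<eta>) auto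
    have "int \<eta> * int a < int \<eta> * int dX" using E(1) False unfolding slice_deg_def by simp
    hence "a < dX" using \<open>0 < \<eta>\<close> by (simp add: mult_less_cancel_left)
    moreover have "a < q"
    proof (rule ccontr)
      assume "\<not> a < q"
      hence E0: "slice_deg \<eta> dT dX a = 0" using E(2) by simp
      hence dT: "dT = int \<eta> * (int a - int dX)" unfolding slice_deg_def by (simp add: algebra_simps)
      have "cond_H q \<eta> dT dX"
        unfolding cond_H_def using eta \<open>0 < \<eta>\<close> False \<open>\<not> a < q\<close> dT by auto
      moreover have "(dT + int \<eta> * int dX) div int \<eta> = int a"
        using \<open>0 < \<eta>\<close> unfolding dT by (simp add: algebra_simps)
      ultimately have "b \<noteq> 0" using K unfolding K_star_def by auto
      thus False using b E0 by simp
    qed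
    ultimately show ?thesis using E(1) by simp
  qed
  thus "a \<le> dX" "0 \<le> slice_deg \<eta> dT dX a" "a < q \<or> (a = dX \<and> 0 \<le> dT)" by auto
qed

lemma K_star_large_iff:
  assumes eT: "q \<le> eT" and eX: "q \<le> eX"
  shows "(a, b) \<in> K_star q \<eta> (int eT) eX
    \<longleftrightarrow> (a < q \<or> a = eX) \<and> (b < q \<or> int b = slice_deg \<eta> (int eT) eX a)"
proof -
  have "\<not> cond_H q \<eta> (int eT) eX" unfolding cond_H_def by simp
  hence "(a, b) \<in> K_star q \<eta> (int eT) eX \<longleftrightarrow> (a, b) \<in> K_set q \<eta> (int eT) eX"
    unfolding K_star_def by simp
  moreover have "a \<in> A_X q \<eta> (int eT) eX \<longleftrightarrow> a < q \<or> a = eX"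
    unfolding A_X_nonneg_iff[OF of_nat_0_le_iff] using eX by auto
  moreover have "int q \<le> slice_deg \<eta> (int eT) eX a" if "a < q \<or> a = eX"
    using slice_deg_ge[of a eX "int eT" \<eta>] that eT eX by auto
  ultimately show ?thesis unfolding K_set_iff by auto
qed

lemma finite_K_star:
  assumes "\<eta> \<noteq> 1" and "0 \<le> dT + int \<eta> * int dX"
  shows "finite (K_star q \<eta> dT dX)"
proof (rule finite_subset)
  show "K_star q \<eta> dT dX \<subseteq> {..dX} \<times> {..nat (dT + int \<eta> * int dX)}"
  proof
    fix p assume p: "p \<in> K_star q \<eta> dT dX"
    obtain a b where ab: "p = (a, b)" by force
    note K = K_star_memD[OF assms p[unfolded ab]]
    thus "p \<in> {..dX} \<times> {..nat (dT + int \<eta> * int dX)}"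
      using slice_deg_le[of \<eta> dT dX a] unfolding ab by auto
  qed
qed simp

definition K_weight :: "nat \<Rightarrow> nat \<Rightarrow> int \<Rightarrow> nat \<Rightarrow> nat \<times> nat \<Rightarrow> nat" where
  "K_weight q \<eta> dT dX = (\<lambda>(a, b). proj_weight q dX a * proj_weight q (nat (slice_deg \<eta> dT dX a)) b)"

definition K_min_weight :: "nat \<Rightarrow> nat \<Rightarrow> int \<Rightarrow> nat \<Rightarrow> nat" where
  "K_min_weight q \<eta> dT dX = Min (K_weight q \<eta> dT dX ` K_star q \<eta> dT dX)"

lemma K_min_weight_le:
  assumes "\<eta> \<noteq> 1" "0 \<le> dT + int \<eta> * int dX" "(a, b) \<in> K_star q \<eta> dT dX"
  shows "K_min_weight q \<eta> dT dX \<le> K_weight q \<eta> dT dX (a, b)"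
  unfolding K_min_weight_def using assms(3) finite_K_star[OF assms(1,2)] by (intro Min_le) auto

lemma K_min_weight_attained:
  assumes "\<eta> \<noteq> 1" "0 \<le> dT + int \<eta> * int dX" "0 < q"
  obtains a b where "(a, b) \<in> K_star q \<eta> dT dX" "K_min_weight q \<eta> dT dX = K_weight q \<eta> dT dX (a, b)"
proof -
  have "(0, nat (slice_deg \<eta> dT dX 0)) \<in> K_star q \<eta> dT dX"
    using assms by (intro K_star_memI) (auto simp: slice_deg_def)
  hence "K_min_weight q \<eta> dT dX \<in> K_weight q \<eta> dT dX ` K_star q \<eta> dT dX"
    unfolding K_min_weight_def using finite_K_star[OF assms(1,2)] by (intro Min_in) auto
  thus ?thesis using that by auto
qed

section \<open>Lower bound for the weight of a codeword\<close>

lemma hweight_ge_fibres: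
  fixes c :: "mono \<Rightarrow> 'a::{finite,field}"
  assumes "T \<subseteq> proj_line"
    and "\<And>t. t \<in> T \<Longrightarrow> w \<le> fibre_weight \<eta> dT dX c t"
  shows "card T * w \<le> hweight (codeword \<eta> dT dX c)"
proof -
  have "card T * w \<le> (\<Sum>t\<in>T. fibre_weight \<eta> dT dX c t)"
    using sum_bounded_below[of T w] assms(2) by (simp add: mult.commute)
  also have "\<dots> \<le> (\<Sum>t\<in>proj_line. fibre_weight \<eta> dT dX c t)"
    by (rule sum_mono2) (use assms(1) in auto)
  finally show ?thesis unfolding hweight_codeword_fibres .
qed

lemma K_min_weight_le_hweight_by_fibres:
  fixes c :: "mono \<Rightarrow> 'a::{finite,field}"
  assumes eta: "\<eta> \<noteq> 1" and d: "0 \<le> dT + int \<eta> * int dX"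
    and K: "(a, e) \<in> K_star CARD('a) \<eta> dT dX" and e: "e = nat (slice_deg \<eta> dT dX a)"
    and T: "T \<subseteq> proj_line" "proj_weight CARD('a) e e \<le> card T"
    and fib: "\<And>t. t \<in> T \<Longrightarrow>
      proj_weight CARD('a) dX a \<le> fibre_weight \<eta> dT dX c t"
  shows "K_min_weight CARD('a) \<eta> dT dX \<le> hweight (codeword \<eta> dT dX c)"
proof -
  have "K_min_weight CARD('a) \<eta> dT dX \<le> proj_weight CARD('a) dX a * proj_weight CARD('a) e e"
    using K_min_weight_le[OF eta d K] unfolding K_weight_def e by simp
  also have "\<dots> \<le> card T * proj_weight CARD('a) dX a"
    using T(2) by (simp add: mult.commute)
  also have "\<dots> \<le> hweight (codeword \<eta> dT dX c)" by (rule hweight_ge_fibres[OF T(1) fib])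
  finally show ?thesis .
qed

lemma obtain_max_degree:
  fixes f :: "'b \<Rightarrow> 'a::zero poly"
  assumes "finite S" "t1 \<in> S" "f t1 \<noteq> 0"
  obtains a t0 where "t0 \<in> S" "coeff (f t0) a \<noteq> 0" "\<And>t. t \<in> S \<Longrightarrow> degree (f t) \<le> a"
proof -
  define T where "T = {t \<in> S. f t \<noteq> 0}"
  have T: "finite T" "T \<noteq> {}" using assms unfolding T_def by auto
  have "Max ((\<lambda>t. degree (f t)) ` T) \<in> (\<lambda>t. degree (f t)) ` T" using T by (intro Max_in) auto
  then obtain t0 where t0: "t0 \<in> T" "degree (f t0) = Max ((\<lambda>t. degree (f t)) ` T)" by force
  show ?thesis
  proof (rule that[of t0 "degree (f t0)"])
    show "t0 \<in> S" "coeff (f t0) (degree (f t0)) \<noteq> 0" using t0(1) unfolding T_def by auto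
    show "degree (f t) \<le> degree (f t0)" if "t \<in> S" for t
      using that T(1) unfolding t0(2) by (cases "f t = 0") (auto simp: T_def)
  qed
qed

lemma K_min_weight_le_hweight_unfolded:
  fixes c :: "mono \<Rightarrow> 'a::{finite,field}"
  assumes eta: "\<eta> \<noteq> 1" and d: "0 \<le> dT + int \<eta> * int dX"
    and t0: "t0 \<in> proj_line" "slice_eval \<eta> dT dX c a t0 \<noteq> 0"
    and a: "a \<le> dX" "a < CARD('a) \<or> a = dX"
    and deg: "\<And>t. t \<in> proj_line \<Longrightarrow> degree (fibre_poly \<eta> dT dX c t) \<le> a"
  shows "K_min_weight CARD('a) \<eta> dT dX \<le> hweight (codeword \<eta> dT dX c)"
proof -
  let ?e = "nat (slice_deg \<eta> dT dX a)"
  have E: "0 \<le> slice_deg \<eta> dT dX a" using t0(2) slice_eval_eq_0 by (meson not_le)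
  have K: "(a, ?e) \<in> K_star CARD('a) \<eta> dT dX"
    using a K_star_memI[OF d _ a(1) E] K_star_memI_top[where q="CARD('a)" and \<eta>=\<eta> and dX=dX] E
    by auto
  have card: "proj_weight CARD('a) ?e ?e \<le> card {t\<in>proj_line. slice_eval \<eta> dT dX c a t \<noteq> 0}"
    using card_form_nonzero_ge[OF degree_slice_poly t0[unfolded slice_eval_def]]
    unfolding slice_eval_def .
  have fib: "proj_weight CARD('a) dX a \<le> fibre_weight \<eta> dT dX c t"
    if "t \<in> {t\<in>proj_line. slice_eval \<eta> dT dX c a t \<noteq> 0}" for t
  proof -
    have "coeff (fibre_poly \<eta> dT dX c t) a \<noteq> 0" using that by (simp add: coeff_fibre_poly[OF a(1)])
    hence "fibre_poly \<eta> dT dX c t \<noteq> 0" "a \<le> degree (fibre_poly \<eta> dT dX c t)"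
      by (auto intro: le_degree)
    moreover have "degree (fibre_poly \<eta> dT dX c t) \<le> a" using deg that by simp
    ultimately show ?thesis
      using card_form_nonzero_ge_degree[OF degree_fibre_poly] unfolding fibre_weight_def
      by fastforce
  qed
  show ?thesis by (rule K_min_weight_le_hweight_by_fibres[OF eta d K refl _ card fib]) auto
qed

text \<open>When \<open>q \<le> dX\<close> and the top slice vanishes, each fibre is a polynomial in \<open>X\<^sub>2/X\<^sub>1\<close> whose
  exponents can be folded below \<open>q\<close> without changing its values.\<close>
definition folded_fibre_poly ::
    "nat \<Rightarrow> nat \<Rightarrow> int \<Rightarrow> nat \<Rightarrow> (mono \<Rightarrow> 'a::field) \<Rightarrow> 'a \<times> 'a \<Rightarrow> 'a poly" where
  "folded_fibre_poly q \<eta> dT dX c t = (\<Sum>k<dX. monom (slice_eval \<eta> dT dX c k t) (fold_exp q k))"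

lemma degree_folded_fibre_poly: "2 \<le> q \<Longrightarrow> degree (folded_fibre_poly q \<eta> dT dX c t) \<le> q - 1"
  unfolding folded_fibre_poly_def
  by (intro degree_sum_le order.trans[OF degree_monom_le fold_exp_le]) auto

lemma coeff_folded_fibre_poly:
  "coeff (folded_fibre_poly q \<eta> dT dX c t) a
     = (\<Sum>k\<in>{k. k < dX \<and> fold_exp q k = a}. slice_eval \<eta> dT dX c k t)"
proof -
  have "coeff (folded_fibre_poly q \<eta> dT dX c t) a
      = (\<Sum>k<dX. if fold_exp q k = a then slice_eval \<eta> dT dX c k t else 0)"
    unfolding folded_fibre_poly_def coeff_sum coeff_monom by simp
  also have "\<dots> = (\<Sum>k\<in>{k\<in>{..<dX}. fold_exp q k = a}. slice_eval \<eta> dT dX c k t)"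
    by (rule sum.inter_filter[symmetric]) simp
  finally show ?thesis by simp
qed

lemma card_fibre_folded:
  fixes c :: "mono \<Rightarrow> 'a::{finite,field}"
  assumes top: "slice_eval \<eta> dT dX c dX t = 0"
  shows "fibre_weight \<eta> dT dX c t
     = card {b. poly (folded_fibre_poly CARD('a) \<eta> dT dX c t) b \<noteq> 0}"
proof -
  have "poly (fibre_poly \<eta> dT dX c t) b = (\<Sum>k<dX. slice_eval \<eta> dT dX c k t * b ^ k)
      + slice_eval \<eta> dT dX c dX t * b ^ dX" for b
    unfolding fibre_poly_def by (simp add: poly_sum poly_monom lessThan_Suc_atMost[symmetric])
  also have "\<dots> b = poly (folded_fibre_poly CARD('a) \<eta> dT dX c t) b" for b
    unfolding folded_fibre_poly_def using top by (simp add: poly_sum poly_monom power_fold_exp)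
  finally have "form_eval dX (fibre_poly \<eta> dT dX c t) (1, b)
      = poly (folded_fibre_poly CARD('a) \<eta> dT dX c t) b" for b
    unfolding form_eval_def by simp
  moreover have "form_eval dX (fibre_poly \<eta> dT dX c t) (0, 1) = 0"
    unfolding form_eval_def using top by (simp add: coeff_fibre_poly)
  ultimately show ?thesis unfolding fibre_weight_def by (simp add: card_proj_line_filter)
qed

lemma slice_deg_fold_exp_gap:
  assumes eta: "2 \<le> \<eta>" and q: "2 \<le> q" and ne: "fold_exp q k \<noteq> k"
    and E: "0 \<le> slice_deg \<eta> dT dX k"
  shows "int (fold_exp q k) + 1 \<le> slice_deg \<eta> dT dX (q - 1)"
proof -
  note gap = fold_exp_neq_self[OF q ne]
  have "slice_deg \<eta> dT dX (q - 1) - slice_deg \<eta> dT dX k = int \<eta> * (int k - int (q - 1))"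
    unfolding slice_deg_def by (simp add: algebra_simps)
  moreover have "int \<eta> * int (fold_exp q k) \<le> int \<eta> * (int k - int (q - 1))"
    using gap(2) q by (intro mult_left_mono) auto
  moreover have "2 * int (fold_exp q k) \<le> int \<eta> * int (fold_exp q k)"
    using eta by (intro mult_right_mono) auto
  ultimately show ?thesis using E gap(1) by linarith
qed

lemma coeff_folded_fibre_poly_cases:
  assumes eta: "\<eta> \<noteq> 1" and a: "a < q" "a < dX"
  obtains (form) p where "degree p \<le> nat (slice_deg \<eta> dT dX a)"
      "\<And>t. coeff (folded_fibre_poly q \<eta> dT dX c t) a = form_eval (nat (slice_deg \<eta> dT dX a)) p t"
    | (spill) k where "fold_exp q k = a" "k \<noteq> a" "0 \<le> slice_deg \<eta> dT dX k" "2 \<le> \<eta>"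
proof -
  define S where "S = {k. k < dX \<and> fold_exp q k = a}"
  have S: "finite S" "a \<in> S" unfolding S_def using a fold_exp_eq_self[of a q] by auto
  have coeff: "coeff (folded_fibre_poly q \<eta> dT dX c t) a = (\<Sum>k\<in>S. slice_eval \<eta> dT dX c k t)" for t
    unfolding S_def by (rule coeff_folded_fibre_poly)
  show ?thesis
  proof (cases "\<eta> = 0")
    case True
    hence E: "slice_deg \<eta> dT dX k = dT" for k unfolding slice_deg_def by simp
    show ?thesis
    proof (rule form[of "\<Sum>k\<in>S. slice_poly \<eta> dT dX c k"])
      show "degree (\<Sum>k\<in>S. slice_poly \<eta> dT dX c k) \<le> nat (slice_deg \<eta> dT dX a)"
        by (intro degree_sum_le) (use degree_slice_poly[of \<eta> dT dX c] E S(1) in auto)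
      show "coeff (folded_fibre_poly q \<eta> dT dX c t) a
          = form_eval (nat (slice_deg \<eta> dT dX a)) (\<Sum>k\<in>S. slice_poly \<eta> dT dX c k) t" for t
        unfolding coeff form_eval_sum slice_eval_def E ..
    qed
  next
    case False
    show ?thesis
    proof (cases "\<exists>k\<in>S. k \<noteq> a \<and> 0 \<le> slice_deg \<eta> dT dX k")
      case True
      thus ?thesis using spill False eta unfolding S_def by auto
    next
      case no_spill: False
      have "coeff (folded_fibre_poly q \<eta> dT dX c t) a = slice_eval \<eta> dT dX c a t" for t
        unfolding coeff using S no_spill
        by (subst sum.remove[of S a]) (auto intro!: sum.neutral slice_eval_eq_0)
      thus ?thesis using form[OF degree_slice_poly] unfolding slice_eval_def by blast
    qed
  qed
qed

lemma fibre_weight_ge_folded: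
  fixes c :: "mono \<Rightarrow> 'a::{finite,field}"
  assumes top: "slice_eval \<eta> dT dX c dX t = 0"
    and nz: "folded_fibre_poly CARD('a) \<eta> dT dX c t \<noteq> 0"
    and deg: "degree (folded_fibre_poly CARD('a) \<eta> dT dX c t) \<le> a"
  shows "CARD('a) - a \<le> fibre_weight \<eta> dT dX c t"
proof -
  have "CARD('a) - a \<le> CARD('a) - degree (folded_fibre_poly CARD('a) \<eta> dT dX c t)"
    using deg by simp
  also have "\<dots> \<le> card {b. poly (folded_fibre_poly CARD('a) \<eta> dT dX c t) b \<noteq> 0}"
    by (rule card_poly_nonroots_ge[OF nz])
  finally show ?thesis unfolding card_fibre_folded[OF top] .
qed

lemma obtain_folded_top_coeff:
  fixes c :: "mono \<Rightarrow> 'a::{finite,field}"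
  assumes dX: "CARD('a) \<le> dX"
    and top: "\<And>t. t \<in> proj_line \<Longrightarrow> slice_eval \<eta> dT dX c dX t = 0"
    and nz: "t1 \<in> proj_line" "x1 \<in> proj_line" "form_eval dX (fibre_poly \<eta> dT dX c t1) x1 \<noteq> 0"
  obtains a t0 where "t0 \<in> proj_line" "coeff (folded_fibre_poly CARD('a) \<eta> dT dX c t0) a \<noteq> 0"
    "\<And>t. t \<in> proj_line \<Longrightarrow> degree (folded_fibre_poly CARD('a) \<eta> dT dX c t) \<le> a"
    "a < CARD('a)" "a < dX" "0 \<le> slice_deg \<eta> dT dX a"
proof -
  let ?q = "CARD('a)" and ?R = "folded_fibre_poly CARD('a) \<eta> dT dX c"
  have q: "2 \<le> ?q" by (rule card_UNIV_field_ge_2)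
  have "1 \<le> fibre_weight \<eta> dT dX c t1"
    unfolding fibre_weight_def by (rule card_proj_line_filter_pos[OF nz(2)]) (rule nz(3))
  hence "?R t1 \<noteq> 0" using card_fibre_folded[OF top[OF nz(1)]] by (auto simp del: card_0_eq)
  then obtain a t0 where t0: "t0 \<in> proj_line" "coeff (?R t0) a \<noteq> 0"
    and deg: "\<And>t. t \<in> proj_line \<Longrightarrow> degree (?R t) \<le> a"
    using obtain_max_degree[OF finite_proj_line nz(1)] by blast
  have "a \<le> ?q - 1" using le_degree[OF t0(2)] degree_folded_fibre_poly[OF q] by (rule order_trans)
  hence a: "a < ?q" "a < dX" using q dX by auto
  have "(\<Sum>k\<in>{k. k < dX \<and> fold_exp ?q k = a}. slice_eval \<eta> dT dX c k t0) \<noteq> 0"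
    using t0(2) unfolding coeff_folded_fibre_poly .
  then obtain k0 where k0: "k0 \<in> {k. k < dX \<and> fold_exp ?q k = a}" "slice_eval \<eta> dT dX c k0 t0 \<noteq> 0"
    by (rule sum.not_neutral_contains_not_neutral)
  have E0: "0 \<le> slice_deg \<eta> dT dX k0" using k0(2) slice_eval_eq_0 by (meson not_le)
  have "a \<le> k0" using fold_exp_le_self[OF q, of k0] k0(1) by simp
  hence "0 \<le> slice_deg \<eta> dT dX a" using slice_deg_antimono[of a k0 \<eta> dT dX] E0 by linarith
  thus ?thesis using that t0 deg a by blast
qed

lemma K_min_weight_le_hweight_folded:
  fixes c :: "mono \<Rightarrow> 'a::{finite,field}"
  assumes eta: "\<eta> \<noteq> 1" and d: "0 \<le> dT + int \<eta> * int dX" and dX: "CARD('a) \<le> dX"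
    and top: "\<And>t. t \<in> proj_line \<Longrightarrow> slice_eval \<eta> dT dX c dX t = 0"
    and nz: "t1 \<in> proj_line" "x1 \<in> proj_line" "form_eval dX (fibre_poly \<eta> dT dX c t1) x1 \<noteq> 0"
  shows "K_min_weight CARD('a) \<eta> dT dX \<le> hweight (codeword \<eta> dT dX c)"
proof -
  let ?q = "CARD('a)" and ?R = "folded_fibre_poly CARD('a) \<eta> dT dX c"
  obtain a t0 where t0: "t0 \<in> proj_line" "coeff (?R t0) a \<noteq> 0"
    and deg: "\<And>t. t \<in> proj_line \<Longrightarrow> degree (?R t) \<le> a"
    and a: "a < ?q" "a < dX" and E: "0 \<le> slice_deg \<eta> dT dX a"
    using obtain_folded_top_coeff[OF dX top nz] by blast
  have fib: "?q - a \<le> fibre_weight \<eta> dT dX c t" if "t \<in> proj_line" "coeff (?R t) a \<noteq> 0" for t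
    using that by (intro fibre_weight_ge_folded top deg) auto
  show ?thesis
  using eta a proof (cases rule: coeff_folded_fibre_poly_cases[where c=c and dT=dT])
    case (form p)
    let ?e = "nat (slice_deg \<eta> dT dX a)"
    have K: "(a, ?e) \<in> K_star ?q \<eta> dT dX" using K_star_memI[OF d a(1) _ E] a(2) by simp
    have "proj_weight ?q ?e ?e \<le> card {t\<in>proj_line. coeff (?R t) a \<noteq> 0}"
      using card_form_nonzero_ge[OF form(1) t0(1)] t0(2) unfolding form(2) .
    thus ?thesis
      using fib a(2)
      by (intro K_min_weight_le_hweight_by_fibres[OF eta d K refl]) (auto simp: proj_weight_def)
  next
    case (spill k)
    let ?e = "nat (slice_deg \<eta> dT dX (?q - 1))"
    have gap: "int a + 1 \<le> slice_deg \<eta> dT dX (?q - 1)"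
      using slice_deg_fold_exp_gap[OF spill(4) card_UNIV_field_ge_2[where 'a='a], of k dT dX] spill(1-3)
      by simp
    have "(?q - 1, ?e) \<in> K_star ?q \<eta> dT dX"
      using gap dX by (intro K_star_memI[OF d]) auto
    hence "K_min_weight ?q \<eta> dT dX \<le> proj_weight ?q dX (?q - 1) * proj_weight ?q ?e ?e"
      using K_min_weight_le[OF eta d] unfolding K_weight_def by fastforce
    also have "\<dots> \<le> ?q - a" using gap a dX unfolding proj_weight_def by auto
    also have "\<dots> \<le> fibre_weight \<eta> dT dX c t0" using t0 by (rule fib)
    also have "\<dots> \<le> hweight (codeword \<eta> dT dX c)"
      using hweight_ge_fibres[of "{t0}" "fibre_weight \<eta> dT dX c t0"] t0(1) by simp
    finally show ?thesis .
  qed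
qed

lemma K_min_weight_le_hweight:
  fixes c :: "mono \<Rightarrow> 'a::{finite,field}"
  assumes eta: "\<eta> \<noteq> 1" and d: "0 \<le> dT + int \<eta> * int dX"
    and nz: "codeword \<eta> dT dX c \<noteq> (\<lambda>_. 0)"
  shows "K_min_weight CARD('a) \<eta> dT dX \<le> hweight (codeword \<eta> dT dX c)"
proof -
  obtain t1 x1 where t1: "t1 \<in> proj_line" "x1 \<in> proj_line"
    "form_eval dX (fibre_poly \<eta> dT dX c t1) x1 \<noteq> 0"
    using nz unfolding codeword_eq_0_iff by (auto simp: eval_poly_hpoint)
  hence "fibre_poly \<eta> dT dX c t1 \<noteq> 0" by auto
  then obtain a t0 where t0: "t0 \<in> proj_line" "coeff (fibre_poly \<eta> dT dX c t0) a \<noteq> 0"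
    and deg: "\<And>t. t \<in> proj_line \<Longrightarrow> degree (fibre_poly \<eta> dT dX c t) \<le> a"
    using obtain_max_degree[OF finite_proj_line t1(1)] by blast
  have a: "a \<le> dX" using le_degree[OF t0(2)] degree_fibre_poly by (rule order_trans)
  show ?thesis
  proof (cases "a < CARD('a) \<or> a = dX")
    case True
    have "slice_eval \<eta> dT dX c a t0 \<noteq> 0" using t0(2) by (simp add: coeff_fibre_poly[OF a])
    thus ?thesis by (rule K_min_weight_le_hweight_unfolded[OF eta d t0(1) _ a True deg])
  next
    case False
    have "slice_eval \<eta> dT dX c dX t = 0" if "t \<in> proj_line" for t
      using deg[OF that] False a coeff_eq_0[of "fibre_poly \<eta> dT dX c t" dX]
      by (simp add: coeff_fibre_poly)
    thus ?thesis using False a by (intro K_min_weight_le_hweight_folded[OF eta d _ _ t1]) auto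
  qed
qed

section \<open>Codewords given by products of linear forms\<close>

definition mono_eval :: "mono \<Rightarrow> ('a::field \<times> 'a \<times> 'a \<times> 'a) \<Rightarrow> 'a" where
  "mono_eval m P = (case m of (c1, c2, d1, d2) \<Rightarrow> case P of (t1, t2, x1, x2) \<Rightarrow>
     t1 ^ c1 * t2 ^ c2 * x1 ^ d1 * x2 ^ d2)"

definition mono_mult :: "mono \<Rightarrow> mono \<Rightarrow> mono" where
  "mono_mult m n = (case m of (c1, c2, d1, d2) \<Rightarrow> case n of (c1', c2', d1', d2') \<Rightarrow>
     (c1 + c1', c2 + c2', d1 + d1', d2 + d2'))"

definition bihom_fun :: "nat \<Rightarrow> int \<Rightarrow> nat \<Rightarrow> (('a::field \<times> 'a \<times> 'a \<times> 'a) \<Rightarrow> 'a) \<Rightarrow> bool" where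
  "bihom_fun \<eta> dT dX g \<longleftrightarrow> (\<exists>c. \<forall>P. eval_poly \<eta> dT dX c P = g P)"

lemma mono_eval_simp:
  "mono_eval (c1, c2, d1, d2) P
     = fst P ^ c1 * fst (snd P) ^ c2 * fst (snd (snd P)) ^ d1 * snd (snd (snd P)) ^ d2"
  by (cases P) (simp add: mono_eval_def)

lemma eval_poly_eq_sum_mono_eval:
  "eval_poly \<eta> dT dX c P = (\<Sum>m\<in>hmonos \<eta> dT dX. c m * mono_eval m P)"
  unfolding eval_poly_def mono_eval_def
  by (cases P) (auto intro!: sum.cong simp: mult.assoc split: prod.splits)

lemma mono_eval_mult: "mono_eval (mono_mult m n) P = mono_eval m P * mono_eval n P"
  unfolding mono_eval_def mono_mult_def by (auto simp: power_add mult_ac split: prod.splits)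

lemma bideg_mono_mult:
  "bideg \<eta> (mono_mult m n) = (fst (bideg \<eta> m) + fst (bideg \<eta> n), snd (bideg \<eta> m) + snd (bideg \<eta> n))"
  unfolding bideg_def mono_mult_def by (auto simp: algebra_simps split: prod.splits)

lemma bihom_fun_cong:
  "bihom_fun \<eta> d e g \<Longrightarrow> d = d' \<Longrightarrow> e = e' \<Longrightarrow> (\<And>P. g P = g' P) \<Longrightarrow> bihom_fun \<eta> d' e' g'"
  unfolding bihom_fun_def by auto

lemma bihom_fun_mono_eval:
  assumes "bideg \<eta> m = (d, e)"
  shows "bihom_fun \<eta> d e (mono_eval m)"
proof -
  have m: "m \<in> hmonos \<eta> d e" using assms unfolding hmonos_def by simp
  have "eval_poly \<eta> d e (\<lambda>m'. if m' = m then 1 else 0) P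
      = (\<Sum>m'\<in>hmonos \<eta> d e. if m' = m then mono_eval m' P else 0)" for P
    unfolding eval_poly_eq_sum_mono_eval by (rule sum.cong) auto
  hence "eval_poly \<eta> d e (\<lambda>m'. if m' = m then 1 else 0) P = mono_eval m P" for P
    using m by (simp add: sum.delta')
  thus ?thesis unfolding bihom_fun_def by blast
qed

lemma bihom_fun_add_scaled:
  assumes "bihom_fun \<eta> d e g" and "bihom_fun \<eta> d e h"
  shows "bihom_fun \<eta> d e (\<lambda>P. g P + a * h P)"
proof -
  obtain c1 c2 where c: "\<And>P. eval_poly \<eta> d e c1 P = g P" "\<And>P. eval_poly \<eta> d e c2 P = h P"
    using assms unfolding bihom_fun_def by blast
  have "eval_poly \<eta> d e (\<lambda>m. c1 m + a * c2 m) P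
      = (\<Sum>m\<in>hmonos \<eta> d e. c1 m * mono_eval m P) + a * (\<Sum>m\<in>hmonos \<eta> d e. c2 m * mono_eval m P)" for P
    unfolding eval_poly_eq_sum_mono_eval sum_distrib_left sum.distrib[symmetric]
    by (rule sum.cong) (auto simp: algebra_simps)
  hence "eval_poly \<eta> d e (\<lambda>m. c1 m + a * c2 m) P = g P + a * h P" for P
    using c unfolding eval_poly_eq_sum_mono_eval by simp
  thus ?thesis unfolding bihom_fun_def by blast
qed

text \<open>The coefficient of a monomial \<open>m\<close> in the product collects all factorisations \<open>m = m\<^sub>1 m\<^sub>2\<close>.\<close>
lemma bihom_fun_mult:
  assumes g: "bihom_fun \<eta> d1 e1 g" and h: "bihom_fun \<eta> d2 e2 h"
  shows "bihom_fun \<eta> (d1 + d2) (e1 + e2) (\<lambda>P. g P * h P)"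
proof -
  obtain c1 c2 where c: "\<And>P. eval_poly \<eta> d1 e1 c1 P = g P" "\<And>P. eval_poly \<eta> d2 e2 c2 P = h P"
    using g h unfolding bihom_fun_def by blast
  let ?S = "hmonos \<eta> d1 e1 \<times> hmonos \<eta> d2 e2" and ?H = "hmonos \<eta> (d1 + d2) (e1 + e2)"
  define c where "c m = (\<Sum>p\<in>{p\<in>?S. mono_mult (fst p) (snd p) = m}. c1 (fst p) * c2 (snd p))" for m
  have img: "(\<lambda>p. mono_mult (fst p) (snd p)) ` ?S \<subseteq> ?H"
    unfolding hmonos_def by (auto simp: bideg_mono_mult)
  have "eval_poly \<eta> (d1 + d2) (e1 + e2) c P = g P * h P" for P
  proof -
    have "eval_poly \<eta> (d1 + d2) (e1 + e2) c P
        = (\<Sum>m\<in>?H. \<Sum>p\<in>{p\<in>?S. mono_mult (fst p) (snd p) = m}.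
             c1 (fst p) * c2 (snd p) * mono_eval (mono_mult (fst p) (snd p)) P)"
      unfolding eval_poly_eq_sum_mono_eval c_def
      by (intro sum.cong refl) (simp add: sum_distrib_right)
    also have "\<dots> = (\<Sum>p\<in>?S. c1 (fst p) * c2 (snd p) * mono_eval (mono_mult (fst p) (snd p)) P)"
      by (rule sum.group) (use img in auto)
    also have "\<dots> = (\<Sum>p\<in>?S. (c1 (fst p) * mono_eval (fst p) P) * (c2 (snd p) * mono_eval (snd p) P))"
      by (intro sum.cong refl) (simp add: mono_eval_mult mult_ac)
    also have "\<dots> = g P * h P"
      unfolding c(1,2)[symmetric] eval_poly_eq_sum_mono_eval
      by (simp add: sum_product sum.cartesian_product case_prod_beta)
    finally show ?thesis .
  qed
  thus ?thesis unfolding bihom_fun_def by blast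
qed

lemma bihom_fun_one: "bihom_fun \<eta> 0 0 (\<lambda>P. 1)"
  using bihom_fun_mono_eval[of \<eta> "(0, 0, 0, 0)" 0 0]
  by (rule bihom_fun_cong) (auto simp: bideg_def mono_eval_simp)

lemma bihom_fun_power:
  assumes "bihom_fun \<eta> d e g"
  shows "bihom_fun \<eta> (int n * d) (n * e) (\<lambda>P. g P ^ n)"
proof (induction n)
  case 0
  show ?case using bihom_fun_one by (rule bihom_fun_cong) auto
next
  case (Suc n)
  show ?case
    using bihom_fun_mult[OF Suc.IH assms] by (rule bihom_fun_cong) (auto simp: algebra_simps)
qed

lemma bihom_fun_prod:
  assumes "finite S" and "\<And>i. i \<in> S \<Longrightarrow> bihom_fun \<eta> d e (g i)"
  shows "bihom_fun \<eta> (int (card S) * d) (card S * e) (\<lambda>P. \<Prod>i\<in>S. g i P)"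
  using assms
proof (induction S rule: finite_induct)
  case empty
  show ?case using bihom_fun_one by (rule bihom_fun_cong) auto
next
  case (insert x F)
  have "bihom_fun \<eta> (d + int (card F) * d) (e + card F * e) (\<lambda>P. g x P * (\<Prod>i\<in>F. g i P))"
    using insert by (intro bihom_fun_mult) auto
  thus ?case by (rule bihom_fun_cong) (use insert in \<open>auto simp: algebra_simps\<close>)
qed

definition T_form :: "nat \<Rightarrow> 'a set \<Rightarrow> ('a::field \<times> 'a \<times> 'a \<times> 'a) \<Rightarrow> 'a" where
  "T_form s Z P = fst P ^ s * (\<Prod>\<alpha>\<in>Z. fst (snd P) - \<alpha> * fst P)"

definition X_form :: "nat \<Rightarrow> nat \<Rightarrow> nat \<Rightarrow> 'a set \<Rightarrow> ('a::field \<times> 'a \<times> 'a \<times> 'a) \<Rightarrow> 'a" where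
  "X_form \<eta> s1 s2 B P = fst (snd (snd P)) ^ s1 * snd (snd (snd P)) ^ s2 *
     (\<Prod>\<beta>\<in>B. snd (snd (snd P)) - \<beta> * fst P ^ \<eta> * fst (snd (snd P)))"

lemma bihom_fun_T_form_X_form:
  fixes Z B :: "'a::{finite,field} set"
  assumes "int s + int (card Z) - int \<eta> * int s1 = dT" "s1 + s2 + card B = dX"
  shows "bihom_fun \<eta> dT dX (\<lambda>P. T_form s Z P * X_form \<eta> s1 s2 B P)"
proof -
  have mono: "bihom_fun \<eta> d e g" if "bideg \<eta> m = (d, e)" "\<And>P. mono_eval m P = g P" for m d e g
    using bihom_fun_mono_eval[OF that(1)] by (rule bihom_fun_cong) (use that(2) in auto)
  have T1: "bihom_fun \<eta> 1 0 (\<lambda>P. fst P)"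
    by (rule mono[of "(1, 0, 0, 0)"]) (auto simp: bideg_def mono_eval_simp)
  have X1: "bihom_fun \<eta> (- int \<eta>) 1 (\<lambda>P. fst (snd (snd P)))"
    by (rule mono[of "(0, 0, 1, 0)"]) (auto simp: bideg_def mono_eval_simp)
  have X2: "bihom_fun \<eta> 0 1 (\<lambda>P. snd (snd (snd P)))"
    by (rule mono[of "(0, 0, 0, 1)"]) (auto simp: bideg_def mono_eval_simp)
  have T_lin: "bihom_fun \<eta> 1 0 (\<lambda>P. fst (snd P) - \<alpha> * fst P)" for \<alpha> :: 'a
    using bihom_fun_add_scaled[OF mono[of "(0, 1, 0, 0)"] T1, of _ "- \<alpha>"]
    by (rule bihom_fun_cong) (auto simp: bideg_def mono_eval_simp)
  have X_lin: "bihom_fun \<eta> 0 1 (\<lambda>P. snd (snd (snd P)) - \<beta> * fst P ^ \<eta> * fst (snd (snd P)))"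
    for \<beta> :: 'a
    using bihom_fun_add_scaled[OF X2 mono[of "(\<eta>, 0, 1, 0)"], of _ "- \<beta>"]
    by (rule bihom_fun_cong) (auto simp: bideg_def mono_eval_simp mult.assoc)
  have "bihom_fun \<eta> (int s * 1 + int (card Z) * 1) (s * 0 + card Z * 0) (T_form s Z)"
    unfolding T_form_def
    by (rule bihom_fun_mult[OF bihom_fun_power[OF T1] bihom_fun_prod[OF finite T_lin]])
  moreover have "bihom_fun \<eta> (int s1 * (- int \<eta>) + int s2 * 0 + int (card B) * 0)
      (s1 * 1 + s2 * 1 + card B * 1) (X_form \<eta> s1 s2 B)"
    unfolding X_form_def
    by (rule bihom_fun_mult[OF bihom_fun_mult[OF bihom_fun_power[OF X1] bihom_fun_power[OF X2]]
          bihom_fun_prod[OF finite X_lin]])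
  ultimately show ?thesis
    by (rule bihom_fun_cong[OF bihom_fun_mult]) (use assms in \<open>auto simp: algebra_simps\<close>)
qed

lemma T_form_hpoint: "T_form s Z (hpoint t x) = fst t ^ s * (\<Prod>\<alpha>\<in>Z. snd t - \<alpha> * fst t)"
  unfolding T_form_def hpoint_def by simp

lemma X_form_hpoint_affine:
  "fst t ^ \<eta> = 1 \<Longrightarrow> X_form \<eta> s1 s2 B (hpoint t (1, b)) = b ^ s2 * (\<Prod>\<beta>\<in>B. b - \<beta>)"
  unfolding X_form_def hpoint_def by simp

lemma X_form_hpoint_infinity: "X_form \<eta> s1 s2 B (hpoint t (0, 1)) = 0 ^ s1"
  unfolding X_form_def hpoint_def by simp

lemma card_T_form_nonzero:
  fixes Z :: "'a::{finite,field} set"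
  shows "card {t\<in>proj_line. T_form s Z (hpoint t x) \<noteq> 0}
    = (CARD('a) - card Z) + (if s = 0 then 1 else 0)"
proof -
  have "{a. T_form s Z (hpoint (1, a) x) \<noteq> 0} = UNIV - Z"
    by (auto simp: T_form_hpoint prod_zero_iff)
  moreover have "T_form s Z (hpoint (0, 1) x) \<noteq> 0 \<longleftrightarrow> s = 0"
    by (cases s) (auto simp: T_form_hpoint)
  ultimately show ?thesis by (simp add: card_proj_line_filter card_Diff_subset)
qed

lemma card_X_form_fibre_le:
  fixes B :: "'a::{finite,field} set"
  assumes "fst t ^ \<eta> = 1 \<or> (B = {} \<and> s2 = 0)"
  shows "card {x\<in>proj_line. X_form \<eta> s1 s2 B (hpoint t x) \<noteq> 0}
     \<le> card {b. b \<notin> B \<and> (s2 = 0 \<or> b \<noteq> 0)} + (if s1 = 0 then 1 else 0)"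
proof -
  have "{b. X_form \<eta> s1 s2 B (hpoint t (1, b)) \<noteq> 0} \<subseteq> {b. b \<notin> B \<and> (s2 = 0 \<or> b \<noteq> 0)}"
    using assms X_form_hpoint_affine[of t \<eta> s1 s2 B]
    by (auto simp: X_form_def hpoint_def prod_zero_iff)
  hence "card {b. X_form \<eta> s1 s2 B (hpoint t (1, b)) \<noteq> 0} \<le> card {b. b \<notin> B \<and> (s2 = 0 \<or> b \<noteq> 0)}"
    by (intro card_mono) auto
  thus ?thesis by (simp add: card_proj_line_filter X_form_hpoint_infinity)
qed

lemma hweight_T_form_X_form_le:
  fixes c :: "mono \<Rightarrow> 'a::{finite,field}" and Z B :: "'a set"
  assumes e: "\<And>P. eval_poly \<eta> dT dX c P = T_form s Z P * X_form \<eta> s1 s2 B P"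
    and cond: "s = 0 \<Longrightarrow> \<eta> = 0 \<or> (B = {} \<and> s2 = 0)"
  shows "hweight (codeword \<eta> dT dX c) \<le> ((CARD('a) - card Z) + (if s = 0 then 1 else 0)) *
      (card {b. b \<notin> B \<and> (s2 = 0 \<or> b \<noteq> 0)} + (if s1 = 0 then 1 else 0))"
proof -
  define FX where "FX = card {b::'a. b \<notin> B \<and> (s2 = 0 \<or> b \<noteq> 0)} + (if s1 = 0 then 1 else 0)"
  let ?T = "\<lambda>t::'a \<times> 'a. fst t ^ s * (\<Prod>\<alpha>\<in>Z. snd t - \<alpha> * fst t)"
  have fib: "card {x\<in>proj_line. eval_poly \<eta> dT dX c (hpoint t x) \<noteq> 0}
      \<le> (if ?T t \<noteq> 0 then FX else 0)"
    if t: "t \<in> proj_line" for t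
  proof (cases "?T t \<noteq> 0")
    case True
    have "fst t ^ \<eta> = 1 \<or> (B = {} \<and> s2 = 0)"
      using t proof (rule proj_line_cases)
      assume "t = (0, 1)"
      hence "s = 0" using True by (cases s) (auto simp: T_form_hpoint)
      thus ?thesis using cond \<open>t = (0, 1)\<close> by auto
    qed simp
    hence "card {x\<in>proj_line. X_form \<eta> s1 s2 B (hpoint t x) \<noteq> 0} \<le> FX"
      unfolding FX_def by (rule card_X_form_fibre_le)
    thus ?thesis using True by (simp add: e T_form_hpoint)
  qed (simp add: e T_form_hpoint)
  have "hweight (codeword \<eta> dT dX c) \<le> (\<Sum>t\<in>proj_line. if ?T t \<noteq> 0 then FX else 0)"
    unfolding hweight_codeword by (rule sum_mono) (rule fib)
  also have "\<dots> = card {t\<in>proj_line. ?T t \<noteq> 0} * FX"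
    by (simp add: sum.inter_filter[symmetric])
  also have "card {t\<in>proj_line. ?T t \<noteq> 0} = (CARD('a) - card Z) + (if s = 0 then 1 else 0)"
    using card_T_form_nonzero[of s Z] unfolding T_form_hpoint .
  finally show ?thesis unfolding FX_def .
qed

lemma obtain_codeword_T_form_X_form:
  fixes Z B :: "'a::{finite,field} set"
  assumes deg: "int s + int (card Z) - int \<eta> * int s1 = dT" "s1 + s2 + card B = dX"
    and cond: "s = 0 \<Longrightarrow> \<eta> = 0 \<or> (B = {} \<and> s2 = 0)"
    and \<alpha>: "\<alpha> \<notin> Z" and b: "s1 = 0 \<or> (b \<notin> B \<and> s2 = 0)"
  obtains c :: "mono \<Rightarrow> 'a" where "codeword \<eta> dT dX c \<noteq> (\<lambda>_. 0)"
    "hweight (codeword \<eta> dT dX c) \<le> ((CARD('a) - card Z) + (if s = 0 then 1 else 0)) *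
      (card {b. b \<notin> B \<and> (s2 = 0 \<or> b \<noteq> 0)} + (if s1 = 0 then 1 else 0))"
proof -
  obtain c :: "mono \<Rightarrow> 'a" where e: "\<And>P. eval_poly \<eta> dT dX c P = T_form s Z P * X_form \<eta> s1 s2 B P"
    using bihom_fun_T_form_X_form[OF deg] unfolding bihom_fun_def by blast
  define x :: "'a \<times> 'a" where "x = (if s1 = 0 then (0, 1) else (1, b))"
  have "T_form s Z (hpoint (1, \<alpha>) x) \<noteq> 0" using \<alpha> by (simp add: T_form_hpoint prod_zero_iff)
  moreover have "X_form \<eta> s1 s2 B (hpoint (1, \<alpha>) x) \<noteq> 0"
    using b unfolding x_def
    by (auto simp: X_form_hpoint_affine X_form_hpoint_infinity prod_zero_iff)
  moreover have "x \<in> proj_line" unfolding x_def by simp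
  ultimately have "codeword \<eta> dT dX c \<noteq> (\<lambda>_. 0)"
    unfolding codeword_eq_0_iff e using one_in_proj_line by auto
  thus ?thesis using that hweight_T_form_X_form_le[OF e cond] by blast
qed

text \<open>A form \<open>T\<^sub>1\<^sup>s \<Prod>\<^sub>\<alpha>\<^sub>\<in>\<^sub>Z (T\<^sub>2 - \<alpha>T\<^sub>1)\<close> of degree \<open>e\<close> with \<open>|Z| = min e q - 1\<close> has the fewest nonzeros.\<close>
lemma obtain_T_part:
  obtains s and Z :: "'a::{finite,field} set" where "s + card Z = e" "card Z < CARD('a)"
    "(CARD('a) - card Z) + (if s = 0 then 1 else 0) = proj_weight CARD('a) e e" "s = 0 \<Longrightarrow> e = 0"
proof (cases "e = 0")
  case True
  thus ?thesis using that[of 0 "{}"] unfolding proj_weight_def by simp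
next
  case False
  have "min e CARD('a) - 1 \<le> CARD('a)" by simp
  then obtain Z :: "'a set" where Z: "card Z = min e CARD('a) - 1"
    by (rule obtain_subset_with_card_n) blast
  show ?thesis
  proof (rule that[of "e - card Z" Z])
    show "e - card Z + card Z = e" "e - card Z = 0 \<Longrightarrow> e = 0" "card Z < CARD('a)"
      using Z False card_UNIV_field_ge_2[where 'a='a] by auto
    show "(CARD('a) - card Z) + (if e - card Z = 0 then 1 else 0) = proj_weight CARD('a) e e"
      unfolding proj_weight_def using Z False card_UNIV_field_ge_2[where 'a='a] by auto
  qed
qed

text \<open>For \<open>a < q\<close> take \<open>s1 = dX - a\<close>, \<open>s2 = 0\<close>, \<open>|B| = a\<close>; for \<open>a = dX \<ge> q\<close> take \<open>B = F\<^sub>q\<^sup>*\<close> and let the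
  factor \<open>X\<^sub>2\<^bsup>s2\<^esup>\<close> kill \<open>X\<^sub>2 = 0\<close>.\<close>
lemma obtain_X_part:
  assumes a: "a \<le> dX" "a < CARD('a) \<or> a = dX"
  obtains s1 s2 and B :: "'a::{finite,field} set" and b :: 'a where "s1 + s2 + card B = dX"
    "card {b. b \<notin> B \<and> (s2 = 0 \<or> b \<noteq> 0)} + (if s1 = 0 then 1 else 0) = proj_weight CARD('a) dX a"
    "s1 = dX - a" "s1 = 0 \<or> (b \<notin> B \<and> s2 = 0)" "a = 0 \<Longrightarrow> B = {} \<and> s2 = 0"
proof (cases "a < CARD('a)")
  case True
  obtain B :: "'a set" where B: "card B = a" using True
    by (metis obtain_subset_with_card_n less_imp_le_nat)
  then obtain b where "b \<notin> B" using True by (metis UNIV_eq_I less_irrefl)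
  moreover have "{b. b \<notin> B \<and> (0 = (0::nat) \<or> b \<noteq> 0)} = UNIV - B" by auto
  hence "card {b. b \<notin> B \<and> (0 = (0::nat) \<or> b \<noteq> 0)} = CARD('a) - a"
    using B by (simp add: card_Diff_subset)
  ultimately show ?thesis
    using that[of "dX - a" 0 B b] a B unfolding proj_weight_def by auto
next
  case False
  hence aX: "a = dX" "CARD('a) \<le> dX" using a by auto
  define B :: "'a set" where "B = UNIV - {0}"
  have "card B = CARD('a) - 1" unfolding B_def by (simp add: card_Diff_subset)
  moreover have "{b. b \<notin> B \<and> (dX - (CARD('a) - 1) = 0 \<or> b \<noteq> 0)} = {}"
    unfolding B_def using aX card_UNIV_field_ge_2[where 'a='a] by auto
  ultimately show ?thesis
    using that[of 0 "dX - (CARD('a) - 1)" B 0] aX card_UNIV_field_ge_2[where 'a='a]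
    unfolding proj_weight_def by auto
qed

text \<open>If \<open>\<delta> - \<eta>a = 0\<close>, the \<open>T\<close>-factor is constant and the fibre over \<open>T\<^sub>1 = 0\<close>, where \<open>X\<^sub>2 - \<beta>T\<^sub>1\<^sup>\<eta>X\<^sub>1\<close>
  degenerates to \<open>X\<^sub>2\<close>, counts; hence the side condition \<open>pos\<close>.\<close>
lemma obtain_codeword_at_index:
  fixes dT :: int
  assumes a: "a \<le> dX" "a < CARD('a) \<or> a = dX" and E: "0 \<le> slice_deg \<eta> dT dX a"
    and pos: "1 \<le> slice_deg \<eta> dT dX a \<or> \<eta> = 0 \<or> a = 0"
  obtains c :: "mono \<Rightarrow> 'a::{finite,field}" where "codeword \<eta> dT dX c \<noteq> (\<lambda>_. 0)"
    "hweight (codeword \<eta> dT dX c)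
       \<le> proj_weight CARD('a) dX a *
          proj_weight CARD('a) (nat (slice_deg \<eta> dT dX a)) (nat (slice_deg \<eta> dT dX a))"
proof -
  let ?e = "nat (slice_deg \<eta> dT dX a)"
  obtain s and Z :: "'a set" where T: "s + card Z = ?e" "card Z < CARD('a)"
    "(CARD('a) - card Z) + (if s = 0 then 1 else 0) = proj_weight CARD('a) ?e ?e" "s = 0 \<Longrightarrow> ?e = 0"
    using obtain_T_part[where 'a='a and e="?e"] by blast
  have "Z \<noteq> UNIV" using T(2) by auto
  then obtain \<alpha> :: 'a where \<alpha>: "\<alpha> \<notin> Z" by blast
  obtain s1 s2 and B :: "'a set" and b :: 'a where X: "s1 + s2 + card B = dX"
    "card {b. b \<notin> B \<and> (s2 = 0 \<or> b \<noteq> 0)} + (if s1 = 0 then 1 else 0) = proj_weight CARD('a) dX a"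
    "s1 = dX - a" "s1 = 0 \<or> (b \<notin> B \<and> s2 = 0)" "a = 0 \<Longrightarrow> B = {} \<and> s2 = 0"
    using obtain_X_part[OF a] by blast
  have "int s + int (card Z) = slice_deg \<eta> dT dX a" using T(1) E by simp
  moreover have "int \<eta> * int s1 = int \<eta> * int dX - int \<eta> * int a"
    using X(3) a(1) by (simp add: of_nat_diff right_diff_distrib)
  ultimately have deg: "int s + int (card Z) - int \<eta> * int s1 = dT"
    unfolding slice_deg_def by linarith
  have cond: "\<eta> = 0 \<or> (B = {} \<and> s2 = 0)" if "s = 0"
  proof -
    have "slice_deg \<eta> dT dX a = 0" using T(4)[OF that] E by simp
    thus ?thesis using pos X(5) by auto
  qed
  obtain c :: "mono \<Rightarrow> 'a" where c: "codeword \<eta> dT dX c \<noteq> (\<lambda>_. 0)"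
    "hweight (codeword \<eta> dT dX c) \<le> ((CARD('a) - card Z) + (if s = 0 then 1 else 0)) *
      (card {b. b \<notin> B \<and> (s2 = 0 \<or> b \<noteq> 0)} + (if s1 = 0 then 1 else 0))"
    using obtain_codeword_T_form_X_form[OF deg X(1) cond \<alpha> X(4)] by blast
  have "hweight (codeword \<eta> dT dX c) \<le> proj_weight CARD('a) dX a * proj_weight CARD('a) ?e ?e"
    using c(2) unfolding T(3) X(2) by (simp only: mult.commute)
  thus ?thesis using that c(1) by blast
qed

section \<open>The minimum distance\<close>

lemma proj_weight_top_le:
  assumes "int b \<le> e" "b < q \<or> int b = e"
  shows "proj_weight q (nat e) (nat e) \<le> proj_weight q (nat e) b"
  using assms unfolding proj_weight_def by auto

lemma weight_trade_le:
  fixes q a \<eta> :: nat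
  assumes q: "2 \<le> q" and a: "1 \<le> a" "a < q" and eta: "2 \<le> \<eta>"
  shows "q * ((q - \<eta> * a) + 1) \<le> (q - a) * (q + 1)"
proof (cases "q \<le> \<eta> * a")
  case True
  hence "q * ((q - \<eta> * a) + 1) = 1 * q" by simp
  also have "\<dots> \<le> (q - a) * (q + 1)" using a by (intro mult_le_mono) auto
  finally show ?thesis .
next
  case False
  have "2 * a \<le> \<eta> * a" using eta by (intro mult_right_mono) auto
  hence "2 * a < q" using False by linarith
  define r where "r = q - 2 * a"
  have qr: "q = 2 * a + r" unfolding r_def using \<open>2 * a < q\<close> by simp
  have "q - \<eta> * a \<le> r" unfolding r_def using \<open>2 * a \<le> \<eta> * a\<close> by (rule diff_le_mono2)
  hence "q * ((q - \<eta> * a) + 1) \<le> q * (r + 1)" by simp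
  also have "\<dots> \<le> (a + r) * (2 * a + r + 1)"
  proof -
    have "a \<le> a * a" using a(1) by simp
    moreover have "q * (r + 1) = 2 * (a * r) + 2 * a + r * r + r"
      unfolding qr by (simp add: algebra_simps)
    moreover have "(a + r) * (2 * a + r + 1) = 2 * (a * a) + 3 * (a * r) + a + r * r + r"
      by (simp add: algebra_simps)
    ultimately show ?thesis by linarith
  qed
  also have "\<dots> = (q - a) * (q + 1)" using qr by simp
  finally show ?thesis .
qed

text \<open>Trading an index \<open>a \<ge> 1\<close> with \<open>\<delta> - \<eta>a = 0\<close> for the index \<open>0\<close>, whose slice degree is \<open>\<eta>a\<close>, does
  not increase the weight.\<close>
lemma proj_weight_zero_index_le:
  assumes q: "2 \<le> q" and a: "1 \<le> a" "a \<le> dX" "a < q \<or> a = dX" and eta: "2 \<le> \<eta>"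
  shows "proj_weight q dX 0 * proj_weight q (\<eta> * a) (\<eta> * a) \<le> proj_weight q dX a * proj_weight q 0 0"
proof -
  have "proj_weight q dX 0 * proj_weight q (\<eta> * a) (\<eta> * a) = q * ((q - \<eta> * a) + 1)"
    using a unfolding proj_weight_def by simp
  also have "\<dots> \<le> proj_weight q dX a * (q + 1)"
  proof (cases "a < q")
    case True
    have "q * ((q - \<eta> * a) + 1) \<le> (q - a) * (q + 1)" by (rule weight_trade_le[OF q a(1) True eta])
    also have "\<dots> \<le> proj_weight q dX a * (q + 1)"
      unfolding proj_weight_def by (intro mult_right_mono) auto
    finally show ?thesis .
  next
    case False
    hence "a = dX" "q \<le> a" using a by auto
    moreover have "1 * q \<le> \<eta> * a" using eta \<open>q \<le> a\<close> by (intro mult_le_mono) auto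
    ultimately show ?thesis unfolding proj_weight_def by simp
  qed
  finally show ?thesis unfolding proj_weight_def by simp
qed

lemma obtain_codeword_hweight_le_K_min_weight:
  assumes eta: "\<eta> \<noteq> 1" and d: "0 \<le> dT + int \<eta> * int dX"
  obtains c :: "mono \<Rightarrow> 'a::{finite,field}" where "codeword \<eta> dT dX c \<noteq> (\<lambda>_. 0)"
    "hweight (codeword \<eta> dT dX c) \<le> K_min_weight CARD('a) \<eta> dT dX"
proof -
  let ?q = "CARD('a)" and ?e = "\<lambda>a. nat (slice_deg \<eta> dT dX a)"
  have q: "2 \<le> ?q" by (rule card_UNIV_field_ge_2)
  have "0 < ?q" by simp
  then obtain a b where K: "(a, b) \<in> K_star ?q \<eta> dT dX"
    and min: "K_min_weight ?q \<eta> dT dX = K_weight ?q \<eta> dT dX (a, b)"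
    using K_min_weight_attained[OF eta d] by blast
  note V = K_star_memD[OF eta d K]
  have "proj_weight ?q (?e a) (?e a) \<le> proj_weight ?q (?e a) b"
    using V(3,5) by (rule proj_weight_top_le)
  hence min_ge: "proj_weight ?q dX a * proj_weight ?q (?e a) (?e a) \<le> K_min_weight ?q \<eta> dT dX"
    unfolding min K_weight_def by simp
  show ?thesis
  proof (cases "1 \<le> slice_deg \<eta> dT dX a \<or> \<eta> = 0 \<or> a = 0")
    case True
    obtain c :: "mono \<Rightarrow> 'a" where c: "codeword \<eta> dT dX c \<noteq> (\<lambda>_. 0)"
      "hweight (codeword \<eta> dT dX c) \<le> proj_weight ?q dX a * proj_weight ?q (?e a) (?e a)"
      using obtain_codeword_at_index[OF V(1) _ V(2) True] V(4) by blast
    show ?thesis by (rule that[OF c(1) order_trans[OF c(2) min_ge]])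
  next
    case False
    hence E0: "slice_deg \<eta> dT dX a = 0" and eta2: "2 \<le> \<eta>" and a1: "1 \<le> a"
      using V(2) eta by auto
    have E: "?e 0 = \<eta> * a" using E0 unfolding slice_deg_def by (simp add: nat_mult_distrib)
    obtain c :: "mono \<Rightarrow> 'a" where c: "codeword \<eta> dT dX c \<noteq> (\<lambda>_. 0)"
      "hweight (codeword \<eta> dT dX c) \<le> proj_weight ?q dX 0 * proj_weight ?q (?e 0) (?e 0)"
      using obtain_codeword_at_index[of 0 dX \<eta> dT] d q unfolding slice_deg_def by auto
    have trade: "proj_weight ?q dX 0 * proj_weight ?q (?e 0) (?e 0)
        \<le> proj_weight ?q dX a * proj_weight ?q (?e a) (?e a)"
      using proj_weight_zero_index_le[OF q a1 V(1) _ eta2] V(4) unfolding E E0 by auto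
    show ?thesis by (rule that[OF c(1) order_trans[OF c(2) order_trans[OF trade min_ge]]])
  qed
qed

lemma hdist_eq_K_min_weight:
  assumes eta: "\<eta> \<noteq> 1" and d: "0 \<le> dT + int \<eta> * int dX"
  shows "hdist TYPE('a::{finite,field}) \<eta> dT dX = K_min_weight CARD('a) \<eta> dT dX"
  unfolding hdist_def
proof (rule Min_eqI)
  show "finite {hweight w | w. w \<in> hcode TYPE('a) \<eta> dT dX \<and> w \<noteq> (\<lambda>_. 0)}"
    by (rule finite_subset[of _ "range hweight"]) auto
  show "K_min_weight CARD('a) \<eta> dT dX \<le> n"
    if "n \<in> {hweight w | w. w \<in> hcode TYPE('a) \<eta> dT dX \<and> w \<noteq> (\<lambda>_. 0)}" for n
    using that K_min_weight_le_hweight[OF eta d] unfolding hcode_eq_range_codeword by auto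
  obtain c :: "mono \<Rightarrow> 'a" where c: "codeword \<eta> dT dX c \<noteq> (\<lambda>_. 0)"
    "hweight (codeword \<eta> dT dX c) \<le> K_min_weight CARD('a) \<eta> dT dX"
    by (rule obtain_codeword_hweight_le_K_min_weight[OF eta d])
  moreover have "K_min_weight CARD('a) \<eta> dT dX \<le> hweight (codeword \<eta> dT dX c)"
    by (rule K_min_weight_le_hweight[OF eta d c(1)])
  ultimately show "K_min_weight CARD('a) \<eta> dT dX
      \<in> {hweight w | w. w \<in> hcode TYPE('a) \<eta> dT dX \<and> w \<noteq> (\<lambda>_. 0)}"
    unfolding hcode_eq_range_codeword by (intro CollectI exI[of _ "codeword \<eta> dT dX c"]) auto
qed

section \<open>Counting the divisors of a monomial in \<open>\<Delta>\<^sup>*\<close>\<close>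

lemma mono_dvd_Mmono_iff:
  "mono_dvd (Mmono \<eta> dT dX a b) (Mmono \<eta> eT eX \<alpha> \<beta>) \<longleftrightarrow>
     nat (slice_deg \<eta> dT dX a - int b) \<le> nat (slice_deg \<eta> eT eX \<alpha> - int \<beta>) \<and> b \<le> \<beta> \<and>
     dX - a \<le> eX - \<alpha> \<and> a \<le> \<alpha>"
  unfolding Mmono_def mono_dvd_def slice_deg_def by simp

definition divisor_index :: "nat \<Rightarrow> nat \<Rightarrow> int \<Rightarrow> nat \<Rightarrow> nat \<Rightarrow> nat \<Rightarrow> nat \<Rightarrow> nat \<Rightarrow> (nat \<times> nat) set" where
  "divisor_index q \<eta> dT dX eT eX a b = {(\<alpha>, \<beta>) \<in> K_star q \<eta> (int eT) eX.
     mono_dvd (Mmono \<eta> dT dX a b) (Mmono \<eta> (int eT) eX \<alpha> \<beta>)}"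

lemma card_divisors_eq_card_index:
  "card {N \<in> Delta_star q \<eta> (int eT) eX. mono_dvd (Mmono \<eta> dT dX a b) N}
     = card (divisor_index q \<eta> dT dX eT eX a b)"
proof -
  have "{N \<in> Delta_star q \<eta> (int eT) eX. mono_dvd (Mmono \<eta> dT dX a b) N}
      = (\<lambda>(\<alpha>, \<beta>). Mmono \<eta> (int eT) eX \<alpha> \<beta>) ` divisor_index q \<eta> dT dX eT eX a b"
    unfolding Delta_star_def divisor_index_def by auto
  moreover have "inj (\<lambda>(\<alpha>, \<beta>). Mmono \<eta> (int eT) eX \<alpha> \<beta>)" unfolding inj_def Mmono_def by auto
  ultimately show ?thesis by (simp add: card_image inj_on_subset)
qed

definition top_range :: "nat \<Rightarrow> nat \<Rightarrow> nat \<Rightarrow> nat \<Rightarrow> nat set" where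
  "top_range q a n n' = {a..<q} \<union> (if a = n then {n'} else {})"

lemma finite_top_range [simp]: "finite (top_range q a n n')"
  unfolding top_range_def by simp

lemma card_top_range: "q \<le> n' \<Longrightarrow> card (top_range q a n n') = proj_weight q n a"
  unfolding top_range_def proj_weight_def by (subst card_Un_disjoint) auto

text \<open>For \<open>\<epsilon> \<ge> (q, q)\<close>, the exponents \<open>(\<alpha>, \<beta>)\<close> of multiples of \<open>M(a, b)\<close> in \<open>\<Delta>\<^sup>*(\<epsilon>)\<close> lie in this box:
  each is either in \<open>[a, q)\<close> resp. \<open>[b, q)\<close>, or at its top value, which is only possible if \<open>a\<close>
  resp. \<open>b\<close> is at its top value for \<open>\<delta>\<close> too.\<close>
definition divisor_box :: "nat \<Rightarrow> nat \<Rightarrow> int \<Rightarrow> nat \<Rightarrow> nat \<Rightarrow> nat \<Rightarrow> nat \<Rightarrow> nat \<Rightarrow> (nat \<times> nat) set" where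
  "divisor_box q \<eta> dT dX eT eX a b = (SIGMA \<alpha>:top_range q a dX eX.
     top_range q b (nat (slice_deg \<eta> dT dX a)) (nat (slice_deg \<eta> (int eT) eX \<alpha>)))"

lemma card_divisor_box:
  assumes eT: "q \<le> eT" and eX: "q \<le> eX"
  shows "card (divisor_box q \<eta> dT dX eT eX a b) = K_weight q \<eta> dT dX (a, b)"
proof -
  have "q \<le> nat (slice_deg \<eta> (int eT) eX \<alpha>)" if "\<alpha> \<in> top_range q a dX eX" for \<alpha>
  proof -
    have "\<alpha> \<le> eX" using that eX unfolding top_range_def by (auto split: if_splits)
    thus ?thesis using slice_deg_ge[of \<alpha> eX "int eT" \<eta>] eT by linarith
  qed
  hence "card (divisor_box q \<eta> dT dX eT eX a b)
      = (\<Sum>\<alpha>\<in>top_range q a dX eX. proj_weight q (nat (slice_deg \<eta> dT dX a)) b)"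
    unfolding divisor_box_def by (simp add: card_SigmaI card_top_range)
  thus ?thesis unfolding K_weight_def by (simp add: card_top_range[OF eX])
qed

lemma divisor_index_subset_box:
  assumes eta: "\<eta> \<noteq> 1" and d: "0 \<le> dT + int \<eta> * int dX" and K: "(a, b) \<in> K_star q \<eta> dT dX"
    and eT: "q \<le> eT" and eX: "q \<le> eX"
  shows "divisor_index q \<eta> dT dX eT eX a b \<subseteq> divisor_box q \<eta> dT dX eT eX a b"
proof clarify
  fix \<alpha> \<beta> assume "(\<alpha>, \<beta>) \<in> divisor_index q \<eta> dT dX eT eX a b"
  hence K': "(\<alpha> < q \<or> \<alpha> = eX) \<and> (\<beta> < q \<or> int \<beta> = slice_deg \<eta> (int eT) eX \<alpha>)"
    and dv: "nat (slice_deg \<eta> dT dX a - int b) \<le> nat (slice_deg \<eta> (int eT) eX \<alpha> - int \<beta>)"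
      "b \<le> \<beta>" "dX - a \<le> eX - \<alpha>" "a \<le> \<alpha>"
    unfolding divisor_index_def K_star_large_iff[OF eT eX] mono_dvd_Mmono_iff by auto
  note V = K_star_memD[OF eta d K]
  have "\<alpha> \<in> top_range q a dX eX"
  proof (cases "\<alpha> < q")
    case False
    hence "\<alpha> = eX" "a = dX" using K' dv V(1) by auto
    thus ?thesis unfolding top_range_def by simp
  qed (use dv in \<open>simp add: top_range_def\<close>)
  moreover have "\<beta> \<in> top_range q b (nat (slice_deg \<eta> dT dX a)) (nat (slice_deg \<eta> (int eT) eX \<alpha>))"
  proof (cases "\<beta> < q")
    case False
    hence "int \<beta> = slice_deg \<eta> (int eT) eX \<alpha>" using K' by auto
    hence "\<beta> = nat (slice_deg \<eta> (int eT) eX \<alpha>)" "b = nat (slice_deg \<eta> dT dX a)"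
      using dv V(3) by auto
    thus ?thesis unfolding top_range_def by simp
  qed (use dv in \<open>simp add: top_range_def\<close>)
  ultimately show "(\<alpha>, \<beta>) \<in> divisor_box q \<eta> dT dX eT eX a b"
    unfolding divisor_box_def by simp
qed

lemma box_subset_divisor_index:
  assumes eta: "\<eta> \<noteq> 1" and d: "0 \<le> dT + int \<eta> * int dX" and K: "(a, b) \<in> K_star q \<eta> dT dX"
    and eT: "eT = nat (dT + int \<eta> * int dX) + q" and eX: "eX = dX + q"
  shows "divisor_box q \<eta> dT dX eT eX a b \<subseteq> divisor_index q \<eta> dT dX eT eX a b"
proof clarify
  fix \<alpha> \<beta> assume box: "(\<alpha>, \<beta>) \<in> divisor_box q \<eta> dT dX eT eX a b"
  note V = K_star_memD[OF eta d K]
  have \<alpha>: "a \<le> \<alpha>" "\<alpha> \<le> eX" "dX - a \<le> eX - \<alpha>" "\<alpha> < q \<or> \<alpha> = eX"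
    using box V(1) eX unfolding divisor_box_def top_range_def by (auto split: if_splits)
  have E: "int eT \<le> slice_deg \<eta> (int eT) eX \<alpha>" by (rule slice_deg_ge[OF \<alpha>(2)])
  have Ea: "slice_deg \<eta> dT dX a \<le> dT + int \<eta> * int dX" by (rule slice_deg_le)
  have b: "int b \<le> int eT" using V(3) Ea eT d by linarith
  have "(b \<le> \<beta> \<and> \<beta> < q) \<or> (b = nat (slice_deg \<eta> dT dX a) \<and> \<beta> = nat (slice_deg \<eta> (int eT) eX \<alpha>))"
    using box unfolding divisor_box_def top_range_def by (auto split: if_splits)
  hence \<beta>: "b \<le> \<beta>" "\<beta> < q \<or> int \<beta> = slice_deg \<eta> (int eT) eX \<alpha>"
    "\<not> \<beta> < q \<Longrightarrow> int b = slice_deg \<eta> dT dX a"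
    using E b V(2) by auto
  have "nat (slice_deg \<eta> dT dX a - int b) \<le> nat (slice_deg \<eta> (int eT) eX \<alpha> - int \<beta>)"
    using \<beta> Ea E eT d by (cases "\<beta> < q") auto
  hence "mono_dvd (Mmono \<eta> dT dX a b) (Mmono \<eta> (int eT) eX \<alpha> \<beta>)"
    unfolding mono_dvd_Mmono_iff using \<alpha>(1,3) \<beta>(1) by simp
  moreover have "q \<le> eT" "q \<le> eX" using eT eX by auto
  hence "(\<alpha>, \<beta>) \<in> K_star q \<eta> (int eT) eX" using K_star_large_iff \<alpha>(4) \<beta>(2) by blast
  ultimately show "(\<alpha>, \<beta>) \<in> divisor_index q \<eta> dT dX eT eX a b"
    unfolding divisor_index_def by simp
qed

lemma card_divisors_le_K_weight:
  assumes eta: "\<eta> \<noteq> 1" and d: "0 \<le> dT + int \<eta> * int dX" and K: "(a, b) \<in> K_star q \<eta> dT dX"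
    and eT: "q \<le> eT" and eX: "q \<le> eX"
  shows "card {N \<in> Delta_star q \<eta> (int eT) eX. mono_dvd (Mmono \<eta> dT dX a b) N}
    \<le> K_weight q \<eta> dT dX (a, b)"
  unfolding card_divisors_eq_card_index card_divisor_box[OF eT eX, symmetric]
  by (intro card_mono divisor_index_subset_box[OF eta d K eT eX])
    (simp add: divisor_box_def top_range_def)

lemma card_divisors_eq_K_weight:
  assumes eta: "\<eta> \<noteq> 1" and d: "0 \<le> dT + int \<eta> * int dX" and K: "(a, b) \<in> K_star q \<eta> dT dX"
  shows "card {N \<in> Delta_star q \<eta> (int (nat (dT + int \<eta> * int dX) + q)) (dX + q).
      mono_dvd (Mmono \<eta> dT dX a b) N} = K_weight q \<eta> dT dX (a, b)"
proof -
  let ?eT = "nat (dT + int \<eta> * int dX) + q" and ?eX = "dX + q"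
  have "divisor_index q \<eta> dT dX ?eT ?eX a b = divisor_box q \<eta> dT dX ?eT ?eX a b"
    using divisor_index_subset_box[OF eta d K] box_subset_divisor_index[OF eta d K refl refl]
    by (intro antisym) simp_all
  thus ?thesis unfolding card_divisors_eq_card_index by (simp add: card_divisor_box)
qed

lemma bound_fn_eq_Min_K_star:
  "bound_fn q \<eta> dT dX eT eX = Min ((\<lambda>(a, b).
     card {N \<in> Delta_star q \<eta> (int eT) eX. mono_dvd (Mmono \<eta> dT dX a b) N}) ` K_star q \<eta> dT dX)"
  unfolding bound_fn_def Delta_star_def image_image by (simp add: case_prod_beta)

lemma bound_fn_le_K_min_weight:
  assumes eta: "\<eta> \<noteq> 1" and d: "0 \<le> dT + int \<eta> * int dX" and eT: "q \<le> eT" and eX: "q \<le> eX"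
    and q: "0 < q"
  shows "bound_fn q \<eta> dT dX eT eX \<le> K_min_weight q \<eta> dT dX"
proof -
  obtain a b where K: "(a, b) \<in> K_star q \<eta> dT dX"
    and min: "K_min_weight q \<eta> dT dX = K_weight q \<eta> dT dX (a, b)"
    using K_min_weight_attained[OF eta d q] by blast
  have "bound_fn q \<eta> dT dX eT eX
      \<le> card {N \<in> Delta_star q \<eta> (int eT) eX. mono_dvd (Mmono \<eta> dT dX a b) N}"
    unfolding bound_fn_eq_Min_K_star using K finite_K_star[OF eta d] by (intro Min_le) force+
  also have "\<dots> \<le> K_min_weight q \<eta> dT dX"
    unfolding min by (rule card_divisors_le_K_weight[OF eta d K eT eX])
  finally show ?thesis .
qed

lemma bound_fn_eq_K_min_weight:
  assumes eta: "\<eta> \<noteq> 1" and d: "0 \<le> dT + int \<eta> * int dX"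
  shows "bound_fn q \<eta> dT dX (nat (dT + int \<eta> * int dX) + q) (dX + q) = K_min_weight q \<eta> dT dX"
  unfolding bound_fn_eq_Min_K_star K_min_weight_def
proof (intro arg_cong[where f=Min] image_cong refl)
  fix p assume "p \<in> K_star q \<eta> dT dX"
  then obtain a b where "p = (a, b)" "(a, b) \<in> K_star q \<eta> dT dX" by (cases p) auto
  thus "(\<lambda>(a, b). card {N \<in> Delta_star q \<eta> (int (nat (dT + int \<eta> * int dX) + q)) (dX + q).
      mono_dvd (Mmono \<eta> dT dX a b) N}) p = K_weight q \<eta> dT dX p"
    using card_divisors_eq_K_weight[OF eta d] by (simp only: prod.case)
qed

theorem theorem2:
  fixes \<eta> :: nat and dT :: int and dX :: nat
  assumes "\<eta> \<noteq> 1" and "dT + int \<eta> * int dX \<ge> 0"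
  shows "(\<forall>eT eX. eT \<ge> (card (UNIV :: 'a set)) \<and> eX \<ge> (card (UNIV :: 'a set)) \<longrightarrow>
            hdist TYPE('a::{finite,field}) \<eta> dT dX \<ge> bound_fn (card (UNIV :: 'a set)) \<eta> dT dX eT eX)
       \<and> hdist TYPE('a) \<eta> dT dX
           = bound_fn (card (UNIV :: 'a set)) \<eta> dT dX (nat (dT + int \<eta> * int dX) + (card (UNIV :: 'a set))) (dX + (card (UNIV :: 'a set)))"
  using hdist_eq_K_min_weight[OF assms, where 'a='a] bound_fn_le_K_min_weight[OF assms]
    bound_fn_eq_K_min_weight[OF assms, of "CARD('a)"]
  by simp

end
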